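(* Let $\alpha\in(0,1)$, $H\in(0,\tfrac12)$, $T>0$, and let $\rho$ be a real number with $-\frac{\alpha}{4}-\frac{H\alpha}{2}<\rho<\frac{\alpha+1}{4}-\frac{H\alpha}{2}$ such that $\sum_{i=1}^\infty \|A^{\rho}Q^{1/2}\phi_i\|^2=\sum_{i=1}^\infty\lambda_i^{2\rho}q_i<\infty$. Set $\kappa=\frac{\alpha}{2}+H\alpha+2\rho$ and assume $\kappa>0$. Then there is a constant $C$ independent of $s,t$ such that for all $0\le s\le t\le T$, $$\mathrm{E}\Big[\Big\|\int_s^t A^{\frac{\kappa-\alpha}{2}}\mathscr{S}(t-r)\,\mathrm{d}B^Q_H(r)\Big\|^2\Big]+\mathrm{E}\Big[\Big\|\int_s^t A^{\frac{\kappa-\alpha}{2}}\mathscr{C}(t-r)\,\mathrm{d}B^Q_H(r)\Big\|^2\Big]\le C,$$ and moreover $$\mathrm{E}\Big[\Big\|A^{-\frac{\alpha}{2}}\int_s^t \mathscr{S}(t-r)\,\mathrm{d}B^Q_H(r)\Big\|^2\Big]\le C\,(t-s)^{\min\{\frac{2\kappa}{\alpha},2\}}.$$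
   Context: $D\subseteq\mathbb{R}^d$ ($d\in\{1,2,3\}$) is a bounded Lipschitz domain, $\|\cdot\|$ and $\langle\cdot,\cdot\rangle$ are the norm and inner product of $L^2(D)$. $A=-\Delta$ with homogeneous Dirichlet boundary conditions on $D$, with orthonormal eigenpairs $(\lambda_i,\phi_i)_{i\ge1}$; for $\nu\in\mathbb{R}$, $A^{\nu/2}u=\sum_i\lambda_i^{\nu/2}\langle u,\phi_i\rangle\phi_i$. $\mathscr{C}(t)=\cos(A^{\alpha/2}t)$ and $\mathscr{S}(t)=\sin(A^{\alpha/2}t)$ are defined spectrally: $\mathscr{C}(t)u=\sum_i\cos(\lambda_i^{\alpha/2}t)\langle u,\phi_i\rangle\phi_i$, similarly for $\sin$. $Q$ is a self-adjoint nonnegative operator on $L^2(D)$ with $Q\phi_i=q_i\phi_i$, $q_i\ge0$. The noise is $B^Q_H(t)=\sum_{i\ge1}\sqrt{q_i}\,\xi^i_H(t)\phi_i$, where $\xi^i_H$ are mutually independent real fractional Brownian motions with Hurst parameter $H$, i.e. centered Gaussian with $\mathrm{E}[\xi^i_H(t)\xi^i_H(s)]=\frac12(t^{2H}+s^{2H}-|t-s|^{2H})$. For a (operator-valued, smooth) integrand $g$, $\int_s^t g(r)\,\mathrm{d}\xi_H(r)$ is the limit of Riemann sums $\sum_j g(t_j)(\xi_H(t_{j+1})-\xi_H(t_j))$ over partitions $s=t_0<\dots<t_n=t$ with mesh going to $0$, which equals $g(t)\xi_H(t)-g(s)\xi_H(s)-\int_s^t g'(r)\xi_H(r)\,\mathrm{d}r$;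 integrals against $B^Q_H$ are defined componentwise in the basis $(\phi_i)$. *)

theory Defs
  imports "HOL-Probability.Probability"
begin

definition fbm_cov :: "real \<Rightarrow> real \<Rightarrow> real \<Rightarrow> real" where
  "fbm_cov H t s = (t powr (2*H) + s powr (2*H) - \<bar>t - s\<bar> powr (2*H)) / 2"

text \<open>A centered Gaussian family X indexed by I with covariance K: every finite
  linear combination is a centered normal variable whose variance is given by K
  (stated through its characteristic function, which also covers degenerate cases).\<close>
definition centered_gaussian_family ::
  "'w measure \<Rightarrow> ('i \<Rightarrow> 'w \<Rightarrow> real) \<Rightarrow> 'i set \<Rightarrow> ('i \<Rightarrow> 'i \<Rightarrow> real) \<Rightarrow> bool" where
  "centered_gaussian_family M X I K \<longleftrightarrow>
     (\<forall>i\<in>I. X i \<in> borel_measurable M) \<and>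
     (\<forall>F c u. finite F \<longrightarrow> F \<subseteq> I \<longrightarrow>
        char (distr M borel (\<lambda>\<omega>. \<Sum>i\<in>F. c i * X i \<omega>)) u =
        complex_of_real (exp (- (u^2 * (\<Sum>i\<in>F. \<Sum>j\<in>F. c i * c j * K i j)) / 2)))"

definition is_fbm :: "'w measure \<Rightarrow> real \<Rightarrow> (real \<Rightarrow> 'w \<Rightarrow> real) \<Rightarrow> bool" where
  "is_fbm M H X \<longleftrightarrow> centered_gaussian_family M X {0..} (fbm_cov H) \<and>
     (\<forall>\<omega>\<in>space M. continuous_on {0..} (\<lambda>t. X t \<omega>))"

text \<open>Pathwise integral of a smooth deterministic scalar integrand g against a path X,
  via the integration-by-parts formula (limit of Riemann sums).\<close>
definition path_int :: "(real \<Rightarrow> real) \<Rightarrow> (real \<Rightarrow> 'w \<Rightarrow> real) \<Rightarrow> real \<Rightarrow> real \<Rightarrow> 'w \<Rightarrow> real" where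
  "path_int g X s t \<omega> = g t * X t \<omega> - g s * X s \<omega> - integral {s..t} (\<lambda>r. deriv g r * X r \<omega>)"

text \<open>E\<parallel>\<integral>_s^t G(r) dB^Q_H(r)\<parallel>^2 for an operator G diagonal in the eigenbasis
  (G(r) \<phi>_i = g i r \<phi>_i), with B^Q_H = \<Sum> sqrt(q_i) \<xi>_i \<phi>_i; by orthonormality of
  (\<phi>_i) the squared L^2 norm is \<Sum>_i q_i (\<integral> g_i d\<xi>_i)^2.\<close>
definition E_norm2 ::
  "'w measure \<Rightarrow> (nat \<Rightarrow> real) \<Rightarrow> (nat \<Rightarrow> real \<Rightarrow> 'w \<Rightarrow> real) \<Rightarrow> (nat \<Rightarrow> real \<Rightarrow> real)
   \<Rightarrow> real \<Rightarrow> real \<Rightarrow> ennreal" where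
  "E_norm2 M q \<xi> g s t =
     (\<integral>\<^sup>+ \<omega>. (\<Sum>i. ennreal (q i * (path_int (g i) (\<xi> i) s t \<omega>)^2)) \<partial>M)"

end

theory Submission
  imports Defs "HOL-Real_Asymp.Real_Asymp"
begin

text \<open>Since E_norm2 is the q-weighted sum of the second moments of the scalar modes, it suffices
  to bound E[(\<integral>_s^t g d\<xi>)^2] for a single fractional Brownian motion \<xi> and g(r) = a w(\<mu>(t - r)),
  where w is sin or cos and \<mu> = \<lambda>^(\<alpha>/2). The pathwise integral is the limit of Riemann sums,
  which are centred Gaussian, so by Fatou's lemma it is enough to bound their variances
  uniformly. Cut [s, t] into N blocks of length h; summation by parts inside each block writes
  any refinement of the Riemann sum as n + 1 combinations of increments of length at most h, one
  per block, with coefficients bounded by sup |g| and h Lip(g) / n. For H < 1/2, increments over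
  disjoint intervals are negatively correlated and each row of their covariance matrix sums to
  at most 2 v^(2H), so Minkowski's inequality bounds the variance by
  2 N h^(2H) (sup |g| + h Lip(g))^2, independently of the refinement.
  Blocks of length about 1/\<mu> give O(a^2 \<mu>^(1-2H)); for the sine on a short interval a single
  block gives O(a^2 \<mu>^2 (t - s)^(2+2H)). Interpolating between the two and summing over the
  modes with the trace condition yields both estimates.\<close>

section \<open>Second moments of Gaussian variables\<close>

lemma nn_integral_le_of_tendsto:
  fixes f :: "nat \<Rightarrow> 'a \<Rightarrow> ennreal"
  assumes "\<And>n. f n \<in> borel_measurable M"
    and "\<And>x. x \<in> space M \<Longrightarrow> (\<lambda>n. f n x) \<longlonglongrightarrow> g x"
    and "\<And>n. (\<integral>\<^sup>+ x. f n x \<partial>M) \<le> B"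
  shows "(\<integral>\<^sup>+ x. g x \<partial>M) \<le> B"
proof -
  have "(\<integral>\<^sup>+ x. g x \<partial>M) = (\<integral>\<^sup>+ x. liminf (\<lambda>n. f n x) \<partial>M)"
    using assms(2) by (intro nn_integral_cong) (metis lim_imp_Liminf trivial_limit_sequentially)
  also have "\<dots> \<le> liminf (\<lambda>n. \<integral>\<^sup>+ x. f n x \<partial>M)"
    by (rule nn_integral_liminf) (rule assms(1))
  also have "\<dots> \<le> B"
    using assms(3) by (intro order_trans[OF Liminf_le_Limsup Limsup_bounded]) auto
  finally show ?thesis .
qed

lemma one_minus_cos_tendsto_square:
  "((\<lambda>u. 2 * (1 - cos (u * z)) / u\<^sup>2) \<longlongrightarrow> z\<^sup>2) (at_right (0::real))"
  by (real_asymp simp: power2_eq_square)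

lemma (in prob_space) integral_cos_eq_Re_char:
  assumes "Z \<in> borel_measurable M"
  shows "(\<integral> \<omega>. cos (u * Z \<omega>) \<partial>M) = Re (char (distr M borel Z) u)"
proof -
  have int: "integrable M (\<lambda>\<omega>. iexp (u * Z \<omega>))"
    by (intro integrable_const_bound[where B=1]) (use assms in auto)
  have "char (distr M borel Z) u = (CLINT \<omega>|M. iexp (u * Z \<omega>))"
    unfolding char_def using assms by (subst integral_distr) auto
  then show ?thesis using integral_Re[OF int] by (simp add: Re_exp)
qed

text \<open>Fatou's lemma as u \<rightarrow> 0 in E[2(1 - cos(uZ))/u^2] = 2(1 - exp(-u^2 V/2))/u^2 \<le> V.\<close>
lemma second_moment_le_of_char:
  fixes Z :: "'w \<Rightarrow> real"
  assumes "prob_space M" and Z: "Z \<in> borel_measurable M"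
    and char: "\<And>u. char (distr M borel Z) u = complex_of_real (exp (- (u\<^sup>2 * V) / 2))"
  shows "0 \<le> V" and "(\<integral>\<^sup>+ \<omega>. ennreal ((Z \<omega>)\<^sup>2) \<partial>M) \<le> ennreal V"
proof -
  interpret prob_space M by fact
  interpret D: real_distribution "distr M borel Z" using Z by simp
  have "exp (- V / 2) \<le> 1"
    using D.cmod_char_le_1[of 1] char[of 1] by simp
  then show V: "0 \<le> V" by simp
  have E_cos: "(\<integral> \<omega>. cos (u * Z \<omega>) \<partial>M) = exp (- (u\<^sup>2 * V) / 2)" for u
    using integral_cos_eq_Re_char[OF Z, of u] char[of u] by simp
  define f where "f u \<omega> = 2 * (1 - cos (u * Z \<omega>)) / u\<^sup>2" for u \<omega>
  have E_f: "(\<integral>\<^sup>+ \<omega>. ennreal (f u \<omega>) \<partial>M) \<le> ennreal V" for u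
  proof -
    have f_le: "\<bar>f u \<omega>\<bar> \<le> 4 / u\<^sup>2" for \<omega>
    proof -
      have "1 - cos (u * Z \<omega>) \<le> 2"
        using cos_ge_minus_one[of "u * Z \<omega>"] by linarith
      then have "2 * (1 - cos (u * Z \<omega>)) \<le> 2 * 2" by (rule mult_left_mono) simp
      then have "\<bar>2 * (1 - cos (u * Z \<omega>))\<bar> \<le> 4" by simp
      then show ?thesis unfolding f_def abs_divide abs_power2 by (rule divide_right_mono) simp
    qed
    have "f u \<in> borel_measurable M" unfolding f_def using Z by measurable
    then have int: "integrable M (f u)"
      using f_le by (intro integrable_const_bound[where B="4 / u\<^sup>2"]) auto
    have "integrable M (\<lambda>\<omega>. cos (u * Z \<omega>))"
      using Z by (intro integrable_const_bound[where B=1]) auto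
    then have "(\<integral> \<omega>. f u \<omega> \<partial>M) = 2 * (1 - exp (- (u\<^sup>2 * V) / 2)) / u\<^sup>2"
      by (simp add: f_def diff_divide_distrib right_diff_distrib prob_space E_cos
          Bochner_Integration.integral_diff)
    also have "\<dots> \<le> V"
      using exp_ge_add_one_self[of "- (u\<^sup>2 * V) / 2"] V
      by (cases "u = 0") (simp_all add: field_simps)
    finally have "(\<integral> \<omega>. f u \<omega> \<partial>M) \<le> V" .
    moreover have "0 \<le> f u \<omega>" for \<omega> by (simp add: f_def)
    then have "(\<integral>\<^sup>+ \<omega>. ennreal (f u \<omega>) \<partial>M) = ennreal (\<integral> \<omega>. f u \<omega> \<partial>M)"
      using int by (intro nn_integral_eq_integral) auto
    ultimately show ?thesis by (simp add: ennreal_leI)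
  qed
  have to_zero: "filterlim (\<lambda>n. inverse (real n)) (at_right 0) sequentially"
    by (rule filterlim_compose[OF filterlim_inverse_at_right_top filterlim_real_sequentially])
  show "(\<integral>\<^sup>+ \<omega>. ennreal ((Z \<omega>)\<^sup>2) \<partial>M) \<le> ennreal V"
  proof (rule nn_integral_le_of_tendsto[where f="\<lambda>n \<omega>. ennreal (f (inverse (real n)) \<omega>)"])
    show "(\<lambda>n. ennreal (f (inverse (real n)) \<omega>)) \<longlonglongrightarrow> ennreal ((Z \<omega>)\<^sup>2)" for \<omega>
      unfolding f_def
      by (intro tendsto_ennrealI filterlim_compose[OF one_minus_cos_tendsto_square to_zero])
  qed (use Z E_f in \<open>auto simp: f_def\<close>)
qed

section \<open>Finite combinations of point evaluations\<close>

definition point_functional :: "((real \<Rightarrow> real) \<Rightarrow> real) \<Rightarrow> bool" where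
  "point_functional L \<longleftrightarrow>
     (\<exists>F c. finite F \<and> F \<subseteq> {0..} \<and> (\<forall>X. L X = (\<Sum>x\<in>F. c x * X x)))"

text \<open>For a process with covariance K, cov_form K L1 L2 = E[L1(X) L2(X)].\<close>
definition cov_form ::
  "(real \<Rightarrow> real \<Rightarrow> real) \<Rightarrow> ((real \<Rightarrow> real) \<Rightarrow> real) \<Rightarrow> ((real \<Rightarrow> real) \<Rightarrow> real) \<Rightarrow> real" where
  "cov_form K L1 L2 = L1 (\<lambda>x. L2 (K x))"

lemma point_functional_eval: "0 \<le> a \<Longrightarrow> point_functional (\<lambda>X. X a)"
  unfolding point_functional_def by (intro exI[of _ "{a}"] exI[of _ "\<lambda>_. 1"]) auto

lemma point_functional_cmult: "point_functional L \<Longrightarrow> point_functional (\<lambda>X. a * L X)"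
  unfolding point_functional_def
proof (elim exE conjE)
  fix F c assume "finite F" "F \<subseteq> {0..}" "\<forall>X. L X = (\<Sum>x\<in>F. c x * X x)"
  then show "\<exists>F c. finite F \<and> F \<subseteq> {0..} \<and> (\<forall>X. a * L X = (\<Sum>x\<in>F. c x * X x))"
    by (intro exI[of _ F] exI[of _ "\<lambda>x. a * c x"]) (simp add: sum_distrib_left mult.assoc)
qed

lemma point_functional_add:
  assumes "point_functional L1" "point_functional L2"
  shows "point_functional (\<lambda>X. L1 X + L2 X)"
proof -
  obtain F1 c1 where 1: "finite F1" "F1 \<subseteq> {0..}" "\<And>X. L1 X = (\<Sum>x\<in>F1. c1 x * X x)"
    using assms(1) unfolding point_functional_def by blast
  obtain F2 c2 where 2: "finite F2" "F2 \<subseteq> {0..}" "\<And>X. L2 X = (\<Sum>x\<in>F2. c2 x * X x)"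
    using assms(2) unfolding point_functional_def by blast
  define c where "c x = (if x \<in> F1 then c1 x else 0) + (if x \<in> F2 then c2 x else 0)" for x
  have "L1 X + L2 X = (\<Sum>x\<in>F1 \<union> F2. c x * X x)" for X
  proof -
    have "c x * X x = (if x \<in> F1 then c1 x * X x else 0) + (if x \<in> F2 then c2 x * X x else 0)" for x
      by (simp add: c_def distrib_right)
    then have "(\<Sum>x\<in>F1 \<union> F2. c x * X x)
        = (\<Sum>x\<in>F1 \<union> F2. if x \<in> F1 then c1 x * X x else 0)
          + (\<Sum>x\<in>F1 \<union> F2. if x \<in> F2 then c2 x * X x else 0)"
      by (simp only: sum.distrib)
    also have "\<dots> = L1 X + L2 X"
      unfolding 1(3) 2(3) using 1(1) 2(1)
      by (intro arg_cong2[where f="(+)"] sum.mono_neutral_cong_right) auto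
    finally show ?thesis by simp
  qed
  then show ?thesis
    unfolding point_functional_def using 1 2 by (intro exI[of _ "F1 \<union> F2"] exI[of _ c]) auto
qed

lemma point_functional_diff:
  "point_functional L1 \<Longrightarrow> point_functional L2 \<Longrightarrow> point_functional (\<lambda>X. L1 X - L2 X)"
  using point_functional_add[OF _ point_functional_cmult[of L2 "-1"], of L1] by simp

lemma point_functional_sum:
  "(\<And>k. k \<in> A \<Longrightarrow> point_functional (L k)) \<Longrightarrow> point_functional (\<lambda>X. \<Sum>k\<in>A. L k X)"
proof (induction A rule: infinite_finite_induct)
  case (infinite A)
  then show ?case
    unfolding point_functional_def by (intro exI[of _ "{}"]) auto
next
  case empty
  then show ?case
    unfolding point_functional_def by (intro exI[of _ "{}"]) auto
next
  case (insert k A)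
  then show ?case using point_functional_add[of "L k" "\<lambda>X. \<Sum>k\<in>A. L k X"] by simp
qed

lemma point_functional_linear:
  assumes "point_functional L"
  shows "L (\<lambda>x. a * f x + b * g x) = a * L f + b * L g"
proof -
  obtain F c where L_eq: "\<And>X. L X = (\<Sum>x\<in>F. c x * X x)"
    using assms unfolding point_functional_def by blast
  show ?thesis
    unfolding L_eq by (simp add: sum.distrib sum_distrib_left distrib_left mult.left_commute)
qed

lemma cov_form_commute:
  assumes "point_functional L1" "point_functional L2" "\<And>x y. K x y = K y x"
  shows "cov_form K L1 L2 = cov_form K L2 L1"
proof -
  obtain F1 c1 where 1: "\<And>X. L1 X = (\<Sum>x\<in>F1. c1 x * X x)"
    using assms(1) unfolding point_functional_def by blast
  obtain F2 c2 where 2: "\<And>X. L2 X = (\<Sum>x\<in>F2. c2 x * X x)"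
    using assms(2) unfolding point_functional_def by blast
  have "cov_form K L1 L2 = (\<Sum>x\<in>F1. \<Sum>y\<in>F2. c1 x * c2 y * K x y)"
    unfolding cov_form_def 1 2 by (simp add: sum_distrib_left mult.assoc)
  also have "\<dots> = (\<Sum>y\<in>F2. \<Sum>x\<in>F1. c2 y * c1 x * K y x)"
    by (subst sum.swap) (simp add: assms(3)[of _ y for y] mult.commute)
  also have "\<dots> = cov_form K L2 L1"
    unfolding cov_form_def 1 2 by (simp add: sum_distrib_left mult.assoc)
  finally show ?thesis .
qed

lemma cov_form_gaussian:
  assumes "prob_space M" and G: "centered_gaussian_family M X {0..} K"
    and L: "point_functional L"
  shows "0 \<le> cov_form K L L"
    and "(\<lambda>\<omega>. L (\<lambda>t. X t \<omega>)) \<in> borel_measurable M"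
    and "(\<integral>\<^sup>+ \<omega>. ennreal ((L (\<lambda>t. X t \<omega>))\<^sup>2) \<partial>M) \<le> ennreal (cov_form K L L)"
proof -
  obtain F c where F: "finite F" "F \<subseteq> {0..}" and L_eq: "\<And>X. L X = (\<Sum>x\<in>F. c x * X x)"
    using L unfolding point_functional_def by blast
  have cov: "cov_form K L L = (\<Sum>i\<in>F. \<Sum>j\<in>F. c i * c j * K i j)"
    unfolding cov_form_def L_eq by (simp add: sum_distrib_left mult.assoc)
  have "\<forall>i\<in>{0..}. X i \<in> borel_measurable M"
    using G unfolding centered_gaussian_family_def by (rule conjunct1)
  then have L_meas: "(\<lambda>\<omega>. L (\<lambda>t. X t \<omega>)) \<in> borel_measurable M"
    unfolding L_eq using F(2) by (auto intro!: borel_measurable_sum borel_measurable_times)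
  then show "(\<lambda>\<omega>. L (\<lambda>t. X t \<omega>)) \<in> borel_measurable M" .
  note moment = second_moment_le_of_char[OF assms(1) L_meas]
  have char: "char (distr M borel (\<lambda>\<omega>. \<Sum>i\<in>F. c i * X i \<omega>)) u
      = complex_of_real (exp (- (u\<^sup>2 * (\<Sum>i\<in>F. \<Sum>j\<in>F. c i * c j * K i j)) / 2))" for u
  proof -
    have "\<forall>F c u. finite F \<longrightarrow> F \<subseteq> {0..} \<longrightarrow>
        char (distr M borel (\<lambda>\<omega>. \<Sum>i\<in>F. c i * X i \<omega>)) u =
        complex_of_real (exp (- (u\<^sup>2 * (\<Sum>i\<in>F. \<Sum>j\<in>F. c i * c j * K i j)) / 2))"
      using G unfolding centered_gaussian_family_def by (rule conjunct2)
    from this[rule_format, OF F] show ?thesis .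
  qed
  have "char (distr M borel (\<lambda>\<omega>. L (\<lambda>t. X t \<omega>))) u
      = complex_of_real (exp (- (u\<^sup>2 * cov_form K L L) / 2))" for u
    unfolding cov L_eq using char .
  from moment[OF this] show "0 \<le> cov_form K L L"
    and "(\<integral>\<^sup>+ \<omega>. ennreal ((L (\<lambda>t. X t \<omega>))\<^sup>2) \<partial>M) \<le> ennreal (cov_form K L L)" .
qed

lemma sq_le_of_quadratic_nonneg:
  fixes A B C :: real
  assumes nonneg: "\<And>x. 0 \<le> A + 2 * x * B + x\<^sup>2 * C" and "0 \<le> C"
  shows "B\<^sup>2 \<le> A * C"
proof (cases "C = 0")
  case True
  have "B = 0"
  proof (rule ccontr)
    assume "B \<noteq> 0"
    then have "A + 2 * (- (A + 1) / (2 * B)) * B = -1" by (simp add: field_simps)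
    then show False using nonneg[of "- (A + 1) / (2 * B)"] True by simp
  qed
  then show ?thesis using nonneg[of 0] True by simp
next
  case False
  then have "0 < C" using \<open>0 \<le> C\<close> by simp
  have "0 \<le> A + 2 * (- B / C) * B + (- B / C)\<^sup>2 * C" by (rule nonneg)
  also have "\<dots> = A - B\<^sup>2 / C" using \<open>0 < C\<close> by (simp add: field_simps power2_eq_square)
  finally show ?thesis using \<open>0 < C\<close> by (simp add: field_simps)
qed

lemma cov_form_add_cmult:
  assumes "point_functional L1" "point_functional L2" "\<And>x y. K x y = K y x"
  shows "cov_form K (\<lambda>X. L1 X + a * L2 X) (\<lambda>X. L1 X + a * L2 X)
    = cov_form K L1 L1 + 2 * a * cov_form K L1 L2 + a\<^sup>2 * cov_form K L2 L2"
proof -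
  have "cov_form K (\<lambda>X. L1 X + a * L2 X) (\<lambda>X. L1 X + a * L2 X)
     = L1 (\<lambda>x. 1 * L1 (K x) + a * L2 (K x)) + a * L2 (\<lambda>x. 1 * L1 (K x) + a * L2 (K x))"
    unfolding cov_form_def by simp
  also have "\<dots> = cov_form K L1 L1 + a * cov_form K L1 L2 + a * (cov_form K L2 L1 + a * cov_form K L2 L2)"
    unfolding point_functional_linear[OF assms(1)] point_functional_linear[OF assms(2)] cov_form_def
    by (simp add: algebra_simps)
  finally show ?thesis
    using cov_form_commute[OF assms(2,1,3)] by (simp add: algebra_simps power2_eq_square)
qed

lemma sqrt_cov_form_add_le:
  assumes psd: "\<And>L. point_functional L \<Longrightarrow> 0 \<le> cov_form K L L"
    and sym: "\<And>x y. K x y = K y x"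
    and L1: "point_functional L1" and L2: "point_functional L2"
  shows "sqrt (cov_form K (\<lambda>X. L1 X + L2 X) (\<lambda>X. L1 X + L2 X))
    \<le> sqrt (cov_form K L1 L1) + sqrt (cov_form K L2 L2)"
proof -
  define A B C where "A = cov_form K L1 L1" and "B = cov_form K L1 L2" and "C = cov_form K L2 L2"
  have A: "0 \<le> A" and C: "0 \<le> C" using psd L1 L2 by (auto simp: A_def C_def)
  have "B\<^sup>2 \<le> A * C"
  proof (rule sq_le_of_quadratic_nonneg[OF _ C])
    show "0 \<le> A + 2 * x * B + x\<^sup>2 * C" for x
      using psd[OF point_functional_add[OF L1 point_functional_cmult[OF L2]]]
      unfolding cov_form_add_cmult[OF L1 L2 sym] A_def B_def C_def .
  qed
  then have "B \<le> sqrt A * sqrt C"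
    using real_sqrt_le_mono[of "B\<^sup>2" "A * C"] by (simp add: real_sqrt_mult)
  then have "cov_form K (\<lambda>X. L1 X + L2 X) (\<lambda>X. L1 X + L2 X) \<le> (sqrt A + sqrt C)\<^sup>2"
    using cov_form_add_cmult[OF L1 L2 sym, where a=1] A C by (simp add: A_def B_def C_def power2_sum)
  then have "sqrt (cov_form K (\<lambda>X. L1 X + L2 X) (\<lambda>X. L1 X + L2 X)) \<le> sqrt ((sqrt A + sqrt C)\<^sup>2)"
    by (rule real_sqrt_le_mono)
  then show ?thesis using A C by (simp add: A_def C_def)
qed

lemma sqrt_cov_form_sum_le:
  assumes psd: "\<And>L. point_functional L \<Longrightarrow> 0 \<le> cov_form K L L"
    and sym: "\<And>x y. K x y = K y x"
    and L: "\<And>k. k \<in> A \<Longrightarrow> point_functional (L k)"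
  shows "sqrt (cov_form K (\<lambda>X. \<Sum>k\<in>A. L k X) (\<lambda>X. \<Sum>k\<in>A. L k X))
    \<le> (\<Sum>k\<in>A. sqrt (cov_form K (L k) (L k)))"
  using L
proof (induction A rule: infinite_finite_induct)
  case (insert k A)
  have "sqrt (cov_form K (\<lambda>X. \<Sum>k\<in>insert k A. L k X) (\<lambda>X. \<Sum>k\<in>insert k A. L k X))
      \<le> sqrt (cov_form K (L k) (L k)) + sqrt (cov_form K (\<lambda>X. \<Sum>k\<in>A. L k X) (\<lambda>X. \<Sum>k\<in>A. L k X))"
    using sqrt_cov_form_add_le[OF psd sym, of "L k" "\<lambda>X. \<Sum>k\<in>A. L k X"] insert
    by (simp add: point_functional_sum)
  then show ?case using insert by simp
qed (simp_all add: cov_form_def)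

section \<open>Increments of fractional Brownian motion\<close>

lemma fbm_cov_commute: "fbm_cov H x y = fbm_cov H y x"
  unfolding fbm_cov_def by (simp add: abs_minus_commute add.commute)

definition powr_increment :: "real \<Rightarrow> real \<Rightarrow> real \<Rightarrow> real" where
  "powr_increment p v x = (x + v) powr p - x powr p"

text \<open>The covariance of two increments of length v of a fractional Brownian motion
  with 2H = p whose starting points are d apart.\<close>
definition incr_cov :: "real \<Rightarrow> real \<Rightarrow> real \<Rightarrow> real" where
  "incr_cov p v d = (\<bar>d + v\<bar> powr p + \<bar>d - v\<bar> powr p - 2 * \<bar>d\<bar> powr p) / 2"

lemma powr_increment_antimono:
  assumes p: "0 < p" "p < 1" and v: "0 \<le> v" and xy: "0 \<le> x" "x \<le> y"
  shows "powr_increment p v y \<le> powr_increment p v x"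
  unfolding powr_increment_def
proof (rule DERIV_nonpos_imp_decreasing_open[OF xy(2)])
  fix z assume z: "x < z" "z < y"
  then have "0 < z" using xy by simp
  have "((\<lambda>z. (z + v) powr p - z powr p) has_real_derivative
      (p * (z + v) powr (p - 1) - p * z powr (p - 1))) (at z)"
    using \<open>0 < z\<close> v by (auto intro!: derivative_eq_intros)
  moreover have "(z + v) powr (p - 1) \<le> z powr (p - 1)"
    using \<open>0 < z\<close> v p by (intro powr_mono2') auto
  then have "p * (z + v) powr (p - 1) - p * z powr (p - 1) \<le> 0"
    using p by (simp add: mult_left_mono)
  ultimately show "\<exists>y. ((\<lambda>z. (z + v) powr p - z powr p) has_real_derivative y) (at z) \<and> y \<le> 0"
    by blast
next
  show "continuous_on {x..y} (\<lambda>z. (z + v) powr p - z powr p)"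
    using xy v p by (intro continuous_intros continuous_on_powr') auto
qed

lemma powr_increment_nonneg: "0 \<le> p \<Longrightarrow> 0 \<le> v \<Longrightarrow> 0 \<le> x \<Longrightarrow> 0 \<le> powr_increment p v x"
  unfolding powr_increment_def by (simp add: powr_mono2)

text \<open>For p < 1 the covariance of increments over disjoint intervals is negative, and
  concavity of x powr p makes these covariances telescope along a row.\<close>
lemma abs_incr_cov_le:
  assumes p: "0 < p" "p < 1" and v: "0 \<le> v" "v \<le> h" and m: "1 \<le> m"
  shows "\<bar>incr_cov p v (m * h)\<bar>
    \<le> (powr_increment p v ((m - 1) * h) - powr_increment p v (m * h)) / 2"
proof -
  have "0 \<le> h" using v by simp
  then have "v \<le> m * h" using v m mult_right_mono[of 1 m h] by simp
  then have "incr_cov p v (m * h) = (powr_increment p v (m * h) - powr_increment p v (m * h - v)) / 2"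
    unfolding incr_cov_def powr_increment_def using v by simp
  moreover have "powr_increment p v (m * h) \<le> powr_increment p v (m * h - v)"
    using p v \<open>v \<le> m * h\<close> by (intro powr_increment_antimono) auto
  moreover have "powr_increment p v (m * h - v) \<le> powr_increment p v ((m - 1) * h)"
    using p v m \<open>0 \<le> h\<close> mult_right_mono[of 1 m h]
    by (intro powr_increment_antimono) (auto simp: algebra_simps)
  ultimately show ?thesis by simp
qed

lemma incr_cov_row_sum_le:
  assumes p: "0 < p" "p < 1" and v: "0 \<le> v" "v \<le> h" and k: "k < N"
  shows "(\<Sum>j<N. \<bar>incr_cov p v ((real k - real j) * h)\<bar>) \<le> 2 * v powr p"
proof -
  have "0 \<le> h" using v by simp
  define P where "P j = powr_increment p v ((real k - real j) * h) / 2" for j :: nat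
  define Q where "Q j = powr_increment p v ((real j - real k - 1) * h) / 2" for j :: nat
  have left: "(\<Sum>j<k. \<bar>incr_cov p v ((real k - real j) * h)\<bar>) \<le> v powr p / 2"
  proof -
    have "(\<Sum>j<k. \<bar>incr_cov p v ((real k - real j) * h)\<bar>) \<le> (\<Sum>j<k. P (Suc j) - P j)"
    proof (rule sum_mono)
      fix j assume "j \<in> {..<k}"
      then have "1 \<le> real k - real j" by auto
      from abs_incr_cov_le[OF p v this]
      show "\<bar>incr_cov p v ((real k - real j) * h)\<bar> \<le> P (Suc j) - P j"
        unfolding P_def by (simp add: diff_divide_distrib algebra_simps)
    qed
    also have "\<dots> = P k - P 0" by (rule sum_lessThan_telescope)
    also have "\<dots> \<le> v powr p / 2"
      using powr_increment_nonneg[of p v "real k * h"] p v \<open>0 \<le> h\<close>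
      by (simp add: P_def powr_increment_def)
    finally show ?thesis .
  qed
  have right: "(\<Sum>j\<in>{Suc k..<N}. \<bar>incr_cov p v ((real k - real j) * h)\<bar>) \<le> v powr p / 2"
  proof -
    have "(\<Sum>j\<in>{Suc k..<N}. \<bar>incr_cov p v ((real k - real j) * h)\<bar>)
        \<le> (\<Sum>j\<in>{Suc k..<N}. - (Q (Suc j) - Q j))"
    proof (rule sum_mono)
      fix j assume "j \<in> {Suc k..<N}"
      then have "1 \<le> real j - real k" by auto
      from abs_incr_cov_le[OF p v this]
      have "\<bar>incr_cov p v ((real j - real k) * h)\<bar>
          \<le> (powr_increment p v ((real j - real k - 1) * h) - powr_increment p v ((real j - real k) * h)) / 2" .
      moreover have "incr_cov p v ((real k - real j) * h) = incr_cov p v ((real j - real k) * h)"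
        unfolding incr_cov_def by (simp add: abs_minus_commute algebra_simps)
      ultimately show "\<bar>incr_cov p v ((real k - real j) * h)\<bar> \<le> - (Q (Suc j) - Q j)"
        unfolding Q_def by (simp add: diff_divide_distrib algebra_simps)
    qed
    also have "\<dots> = Q (Suc k) - Q N"
      using k by (simp only: sum_negf) (subst sum_Suc_diff'; simp)
    also have "\<dots> \<le> v powr p / 2"
      using powr_increment_nonneg[of p v "(real N - real k - 1) * h"] p v \<open>0 \<le> h\<close> k
      by (simp add: Q_def powr_increment_def)
    finally show ?thesis .
  qed
  have "(\<Sum>j<N. \<bar>incr_cov p v ((real k - real j) * h)\<bar>)
      = (\<Sum>j<k. \<bar>incr_cov p v ((real k - real j) * h)\<bar>) + \<bar>incr_cov p v 0\<bar>
        + (\<Sum>j\<in>{Suc k..<N}. \<bar>incr_cov p v ((real k - real j) * h)\<bar>)"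
  proof -
    have "{..<N} = {..<k} \<union> {k} \<union> {Suc k..<N}" using k by auto
    moreover have "(\<Sum>j\<in>{..<k} \<union> {Suc k..<N}. \<bar>incr_cov p v ((real k - real j) * h)\<bar>)
      = (\<Sum>j<k. \<bar>incr_cov p v ((real k - real j) * h)\<bar>)
        + (\<Sum>j\<in>{Suc k..<N}. \<bar>incr_cov p v ((real k - real j) * h)\<bar>)"
      by (rule sum.union_disjoint) auto
    ultimately show ?thesis by simp
  qed
  also have "\<bar>incr_cov p v 0\<bar> = v powr p"
    unfolding incr_cov_def using v by simp
  finally show ?thesis using left right by simp
qed

definition grid_increments ::
  "nat \<Rightarrow> (nat \<Rightarrow> real) \<Rightarrow> real \<Rightarrow> real \<Rightarrow> real \<Rightarrow> (real \<Rightarrow> real) \<Rightarrow> real" where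
  "grid_increments N c b h v X = (\<Sum>k<N. c k * (X (b + real k * h) - X (b + real k * h - v)))"

lemma point_functional_grid_increments:
  assumes "0 \<le> h" "0 \<le> v" "v \<le> b"
  shows "point_functional (grid_increments N c b h v)"
proof -
  have "0 \<le> b + real k * h - v" for k
  proof -
    have "0 \<le> real k * h" using assms by simp
    then show ?thesis using assms by linarith
  qed
  then have "point_functional (\<lambda>X. c k * (X (b + real k * h) - X (b + real k * h - v)))" for k
    using assms by (intro point_functional_cmult point_functional_diff point_functional_eval) auto
  then show ?thesis
    unfolding grid_increments_def by (rule point_functional_sum)
qed

lemma cov_form_increments:
  "cov_form K (\<lambda>X. \<Sum>k<N. c k * (X (x k) - X (y k))) (\<lambda>X. \<Sum>k<N. c k * (X (x k) - X (y k)))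
    = (\<Sum>k<N. \<Sum>j<N. c k * c j * (K (x k) (x j) - K (x k) (y j) - K (y k) (x j) + K (y k) (y j)))"
  unfolding cov_form_def
  by (simp add: sum_distrib_left sum_subtractf[symmetric] right_diff_distrib mult.assoc
      flip: sum.distrib) (simp add: algebra_simps)

lemma cov_form_grid_increments:
  "cov_form (fbm_cov H) (grid_increments N c b h v) (grid_increments N c b h v)
    = (\<Sum>k<N. \<Sum>j<N. c k * c j * incr_cov (2*H) v ((real k - real j) * h))"
proof -
  have "fbm_cov H (b + real k * h) (b + real j * h) - fbm_cov H (b + real k * h) (b + real j * h - v)
      - fbm_cov H (b + real k * h - v) (b + real j * h) + fbm_cov H (b + real k * h - v) (b + real j * h - v)
      = incr_cov (2*H) v ((real k - real j) * h)" for k j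
  proof -
    have "\<bar>b + real k * h - (b + real j * h - v)\<bar> = \<bar>(real k - real j) * h + v\<bar>"
      and "\<bar>b + real k * h - v - (b + real j * h)\<bar> = \<bar>(real k - real j) * h - v\<bar>"
      and "\<bar>b + real k * h - (b + real j * h)\<bar> = \<bar>(real k - real j) * h\<bar>"
      and "\<bar>b + real k * h - v - (b + real j * h - v)\<bar> = \<bar>(real k - real j) * h\<bar>"
      by (simp_all add: algebra_simps)
    then show ?thesis unfolding fbm_cov_def incr_cov_def by (simp add: field_simps)
  qed
  then show ?thesis
    unfolding grid_increments_def[abs_def]
      cov_form_increments[where x="\<lambda>k. b + real k * h" and y="\<lambda>k. b + real k * h - v"]
    by simp
qed

lemma cov_form_grid_increments_le:
  assumes H: "0 < H" "H < 1/2" and v: "0 \<le> v" "v \<le> h" and c: "\<And>k. k < N \<Longrightarrow> \<bar>c k\<bar> \<le> G"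
  shows "cov_form (fbm_cov H) (grid_increments N c b h v) (grid_increments N c b h v)
    \<le> 2 * G\<^sup>2 * real N * v powr (2*H)"
proof -
  have p: "0 < 2*H" "2*H < 1" using H by auto
  define I where "I k j = incr_cov (2*H) v ((real k - real j) * h)" for k j
  have "(\<Sum>k<N. \<Sum>j<N. c k * c j * I k j) \<le> (\<Sum>k<N. \<Sum>j<N. G\<^sup>2 * \<bar>I k j\<bar>)"
  proof (intro sum_mono)
    fix k j assume "k \<in> {..<N}" "j \<in> {..<N}"
    then have "\<bar>c k\<bar> * \<bar>c j\<bar> \<le> G * G"
      using c[of k] c[of j] by (intro mult_mono) auto
    then have "\<bar>c k * c j\<bar> \<le> G\<^sup>2" by (simp add: abs_mult power2_eq_square)
    moreover have "c k * c j * I k j \<le> \<bar>c k * c j\<bar> * \<bar>I k j\<bar>"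
      by (metis abs_ge_self abs_mult)
    ultimately show "c k * c j * I k j \<le> G\<^sup>2 * \<bar>I k j\<bar>"
      by (meson abs_ge_zero mult_right_mono order_trans)
  qed
  also have "\<dots> \<le> (\<Sum>k<N. G\<^sup>2 * (2 * v powr (2*H)))"
  proof (rule sum_mono)
    fix k assume "k \<in> {..<N}"
    then show "(\<Sum>j<N. G\<^sup>2 * \<bar>I k j\<bar>) \<le> G\<^sup>2 * (2 * v powr (2*H))"
      unfolding sum_distrib_left[symmetric] I_def
      by (intro mult_left_mono incr_cov_row_sum_le[OF p v]) auto
  qed
  also have "\<dots> = 2 * G\<^sup>2 * real N * v powr (2*H)" by simp
  finally show ?thesis unfolding cov_form_grid_increments I_def .
qed

section \<open>Riemann sums\<close>

definition riemann_sum :: "(real \<Rightarrow> real) \<Rightarrow> real \<Rightarrow> real \<Rightarrow> nat \<Rightarrow> (real \<Rightarrow> real) \<Rightarrow> real" where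
  "riemann_sum g s t n X = (\<Sum>j<n. g (s + real j * ((t - s) / real n)) *
      (X (s + real (Suc j) * ((t - s) / real n)) - X (s + real j * ((t - s) / real n))))"

lemma sum_by_parts:
  "(\<Sum>j<n. G j * (Y (Suc j) - Y j)) = G n * Y n - G 0 * Y 0 - (\<Sum>j<n. (G (Suc j) - G j) * Y (Suc j))"
  for G Y :: "nat \<Rightarrow> real"
  by (induction n) (simp_all add: algebra_simps)

lemma sum_by_parts_last:
  "(\<Sum>j<n. G j * (Y (Suc j) - Y j))
    = G 0 * (Y n - Y 0) + (\<Sum>j<n. (G (Suc j) - G j) * (Y n - Y (Suc j)))"
  for G Y :: "nat \<Rightarrow> real"
proof -
  have "(\<Sum>j<n. (G (Suc j) - G j) * (Y n - Y (Suc j)))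
      = (\<Sum>j<n. (G (Suc j) - G j) * Y n) - (\<Sum>j<n. (G (Suc j) - G j) * Y (Suc j))"
    by (simp add: right_diff_distrib sum_subtractf)
  also have "(\<Sum>j<n. (G (Suc j) - G j) * Y n) = (G n - G 0) * Y n"
    by (subst sum_distrib_right[symmetric]) (simp only: sum_lessThan_telescope)
  finally have corrections: "(\<Sum>j<n. (G (Suc j) - G j) * (Y n - Y (Suc j)))
      = (G n - G 0) * Y n - (\<Sum>j<n. (G (Suc j) - G j) * Y (Suc j))" .
  show ?thesis
    unfolding corrections sum_by_parts by (simp add: algebra_simps)
qed

lemma sum_lessThan_mult_blocks:
  "(\<Sum>j<N * n. f j) = (\<Sum>k<N. \<Sum>l<n. f (k * n + l))" for f :: "nat \<Rightarrow> real"
proof -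
  have "sum f {k * n..<k * n + n} = (\<Sum>l<n. f (k * n + l))" for k
    using sum.shift_bounds_nat_ivl[of f 0 "k * n" n] by (simp add: atLeast0LessThan add.commute)
  then show ?thesis
    using sum.nat_group[of f n N] by simp
qed

text \<open>Abel summation inside each of the N blocks of length h turns the Riemann sum on the
  refined grid into n + 1 sums of increments, one increment per block, each ending at a
  block endpoint.\<close>
lemma riemann_sum_blocks:
  fixes s h :: real
  assumes N: "1 \<le> N" and n: "1 \<le> n"
  defines "r \<equiv> \<lambda>j. s + real j * (h / real n)"
    and "v \<equiv> \<lambda>m. real (n - Suc m) * (h / real n)"
  shows "riemann_sum g s (s + real N * h) (N * n) X
    = grid_increments N (\<lambda>k. g (s + real k * h)) (s + h) h h X
      + (\<Sum>m<n. grid_increments N (\<lambda>k. g (r (k * n + Suc m)) - g (r (k * n + m))) (s + h) h (v m) X)"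
proof -
  have grid: "s + real j * ((s + real N * h - s) / real (N * n)) = r j" for j
    using N n by (simp add: r_def field_simps)
  have block_end: "r (k * n + n) = s + h + real k * h" for k
    using n by (simp add: r_def field_simps)
  have block_start: "r (k * n) = s + real k * h" for k
    using n by (simp add: r_def field_simps)
  have inner: "r (Suc (k * n + m)) = s + h + real k * h - v m" if "m < n" for k m
  proof -
    have "real (n - Suc m) = real n - real m - 1" using that by (simp add: of_nat_diff)
    then show ?thesis using n by (simp add: r_def v_def field_simps)
  qed
  have "riemann_sum g s (s + real N * h) (N * n) X
      = (\<Sum>k<N. \<Sum>l<n. g (r (k * n + l)) * (X (r (Suc (k * n + l))) - X (r (k * n + l))))"
    unfolding riemann_sum_def grid sum_lessThan_mult_blocks ..
  also have "\<dots> = (\<Sum>k<N. g (r (k * n)) * (X (r (k * n + n)) - X (r (k * n)))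
      + (\<Sum>m<n. (g (r (k * n + Suc m)) - g (r (k * n + m)))
                * (X (r (k * n + n)) - X (r (k * n + Suc m)))))"
    using sum_by_parts_last[of "\<lambda>l. g (r (k * n + l))" "\<lambda>l. X (r (k * n + l))" n for k]
    by simp
  also have "\<dots> = grid_increments N (\<lambda>k. g (s + real k * h)) (s + h) h h X
      + (\<Sum>k<N. \<Sum>m<n. (g (r (k * n + Suc m)) - g (r (k * n + m)))
                * (X (s + h + real k * h) - X (s + h + real k * h - v m)))"
    unfolding sum.distrib grid_increments_def block_end block_start
    by (intro arg_cong2[where f="(+)"] sum.cong refl) (simp_all add: inner)
  also have "\<dots> = grid_increments N (\<lambda>k. g (s + real k * h)) (s + h) h h X
      + (\<Sum>m<n. grid_increments N (\<lambda>k. g (r (k * n + Suc m)) - g (r (k * n + m))) (s + h) h (v m) X)"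
    unfolding grid_increments_def by (subst sum.swap) simp
  finally show ?thesis .
qed

lemma sqrt_le_mult_sqrt:
  fixes Q A c :: real
  assumes "Q \<le> c\<^sup>2 * A" "0 \<le> c" "0 \<le> A"
  shows "sqrt Q \<le> c * sqrt A"
  using real_sqrt_le_mono[OF assms(1)] assms(2,3) by (simp add: real_sqrt_mult)

lemma point_functional_riemann_sum:
  assumes "0 \<le> s" "s \<le> t"
  shows "point_functional (riemann_sum g s t n)"
proof -
  have "0 \<le> s + real j * ((t - s) / real n)" for j using assms by simp
  then have "point_functional (\<lambda>X. g (s + real j * ((t - s) / real n)) *
      (X (s + real (Suc j) * ((t - s) / real n)) - X (s + real j * ((t - s) / real n))))" for j
    by (intro point_functional_cmult point_functional_diff point_functional_eval)
  then show ?thesis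
    unfolding riemann_sum_def by (rule point_functional_sum)
qed

lemma block_correction_le:
  assumes lipschitz: "L-lipschitz_on {s..s + real N * h} g" and "0 < h" "1 \<le> n" "k < N" "m < n"
  defines "r \<equiv> \<lambda>j. s + real j * (h / real n)"
  shows "\<bar>g (r (k * n + Suc m)) - g (r (k * n + m))\<bar> \<le> L * (h / real n)"
proof -
  have r_in: "r j \<in> {s..s + real N * h}" if "j \<le> N * n" for j
  proof -
    have "real j \<le> real (N * n)" using that by (simp only: of_nat_le_iff)
    then have "real j * (h / real n) \<le> real (N * n) * (h / real n)"
      using \<open>0 < h\<close> by (intro mult_right_mono) auto
    then show ?thesis using \<open>1 \<le> n\<close> \<open>0 < h\<close> by (simp add: r_def)
  qed
  have "k * n + Suc m \<le> Suc k * n" using \<open>m < n\<close> by simp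
  also have "\<dots> \<le> N * n" using \<open>k < N\<close> by (intro mult_right_mono) auto
  finally have "dist (g (r (k * n + Suc m))) (g (r (k * n + m))) \<le> L * dist (r (k * n + Suc m)) (r (k * n + m))"
    using r_in by (intro lipschitz_onD[OF lipschitz]) auto
  moreover have "r (k * n + Suc m) - r (k * n + m) = h / real n"
    by (simp add: r_def algebra_simps add_divide_distrib[symmetric])
  ultimately show ?thesis
    using \<open>0 < h\<close> by (simp add: dist_real_def)
qed

text \<open>The bound does not depend on the refinement n: this is what survives the limit
  defining the path integral.\<close>
lemma sqrt_cov_form_riemann_sum_le:
  assumes H: "0 < H" "H < 1/2"
    and psd: "\<And>L. point_functional L \<Longrightarrow> 0 \<le> cov_form (fbm_cov H) L L"
    and s: "0 \<le> s" and h: "0 < h" and N: "1 \<le> N" and n: "1 \<le> n"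
    and bounded: "\<And>x. x \<in> {s..s + real N * h} \<Longrightarrow> \<bar>g x\<bar> \<le> G"
    and lipschitz: "L-lipschitz_on {s..s + real N * h} g"
  defines "RS \<equiv> riemann_sum g s (s + real N * h) (N * n)"
  shows "sqrt (cov_form (fbm_cov H) RS RS) \<le> (G + L * h) * sqrt (2 * real N * h powr (2*H))"
proof -
  define r where "r j = s + real j * (h / real n)" for j
  define v where "v m = real (n - Suc m) * (h / real n)" for m
  define main where "main = grid_increments N (\<lambda>k. g (s + real k * h)) (s + h) h h"
  define corr where
    "corr m = grid_increments N (\<lambda>k. g (r (k * n + Suc m)) - g (r (k * n + m))) (s + h) h (v m)"
    for m
  have RS_eq: "RS = (\<lambda>X. main X + (\<Sum>m<n. corr m X))"
    using riemann_sum_blocks[OF N n] by (auto simp: RS_def main_def corr_def r_def v_def)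
  have v: "0 \<le> v m" "v m \<le> h" for m
  proof -
    show "0 \<le> v m" using h by (simp add: v_def)
    have "real (n - Suc m) * (h / real n) \<le> real n * (h / real n)"
      using h by (intro mult_right_mono) auto
    then show "v m \<le> h" using n by (simp add: v_def)
  qed
  have pf_main: "point_functional main" and pf_corr: "point_functional (corr m)" for m
    unfolding main_def corr_def using s h v[of m]
    by (auto intro!: point_functional_grid_increments)
  have "s \<in> {s..s + real N * h}" using h by simp
  then have "0 \<le> G" using bounded abs_ge_zero order_trans by blast
  have "0 \<le> L" using lipschitz by (rule lipschitz_on_nonneg)
  define W where "W = sqrt (2 * real N * h powr (2*H))"
  have sqrt_le: "sqrt Q \<le> c * W" if "Q \<le> 2 * c\<^sup>2 * real N * h powr (2*H)" "0 \<le> c" for Q c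
    unfolding W_def using that by (intro sqrt_le_mult_sqrt) (simp_all add: ac_simps)
  have main_le: "sqrt (cov_form (fbm_cov H) main main) \<le> G * W"
    unfolding main_def using h N \<open>0 \<le> G\<close>
    by (intro sqrt_le cov_form_grid_increments_le[OF H] bounded) (auto simp: mult_right_mono)
  have corr_le: "sqrt (cov_form (fbm_cov H) (corr m) (corr m)) \<le> L * (h / real n) * W"
    if "m < n" for m
  proof (rule sqrt_le)
    have "cov_form (fbm_cov H) (corr m) (corr m) \<le> 2 * (L * (h / real n))\<^sup>2 * real N * v m powr (2*H)"
      unfolding corr_def r_def
      using block_correction_le[OF lipschitz h n _ \<open>m < n\<close>] by (intro cov_form_grid_increments_le[OF H v])
    also have "\<dots> \<le> 2 * (L * (h / real n))\<^sup>2 * real N * h powr (2*H)"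
      using v[of m] H by (intro mult_left_mono powr_mono2) auto
    finally show "cov_form (fbm_cov H) (corr m) (corr m) \<le> 2 * (L * (h / real n))\<^sup>2 * real N * h powr (2*H)" .
    show "0 \<le> L * (h / real n)" using \<open>0 \<le> L\<close> h by simp
  qed
  have "sqrt (cov_form (fbm_cov H) RS RS)
      \<le> sqrt (cov_form (fbm_cov H) main main) + (\<Sum>m<n. sqrt (cov_form (fbm_cov H) (corr m) (corr m)))"
    unfolding RS_eq
    using sqrt_cov_form_add_le[OF psd fbm_cov_commute pf_main point_functional_sum[where A="{..<n}" and L=corr]]
      sqrt_cov_form_sum_le[OF psd fbm_cov_commute, where A="{..<n}" and L=corr] pf_corr
    by simp
  also have "\<dots> \<le> G * W + (\<Sum>m<n. L * (h / real n) * W)"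
    using main_le corr_le by (intro add_mono sum_mono) auto
  also have "\<dots> = (G + L * h) * W" using n by (simp add: algebra_simps)
  finally show ?thesis unfolding W_def .
qed

section \<open>The pathwise integral\<close>

lemma integral_grid_sum:
  fixes f :: "real \<Rightarrow> real" and r :: "nat \<Rightarrow> real"
  assumes mono: "\<And>j. r j \<le> r (Suc j)" and f: "continuous_on {r 0..r m} f"
  shows "integral {r 0..r m} f = (\<Sum>j<m. integral {r j..r (Suc j)} f)"
  using f
proof (induction m)
  case (Suc m)
  have "r 0 \<le> r m" using mono by (induction m) (auto intro: order_trans)
  then have f_left: "continuous_on {r 0..r m} f" and f_right: "continuous_on {r m..r (Suc m)} f"
    using Suc.prems mono[of m] by (auto elim: continuous_on_subset)
  have "integral {r 0..r m} f + integral {r m..r (Suc m)} f = integral {r 0..r (Suc m)} f"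
    using \<open>r 0 \<le> r m\<close> mono[of m] Suc.prems
    by (intro Henstock_Kurzweil_Integration.integral_combine integrable_continuous_interval) auto
  then show ?case using Suc.IH[OF f_left] by simp
qed simp

lemma riemann_cell_error_le:
  fixes g g' X :: "real \<Rightarrow> real"
  assumes "a \<le> b"
    and deriv: "\<And>x. (g has_real_derivative g' x) (at x)"
    and g': "continuous_on {a..b} g'" and X: "continuous_on {a..b} X"
    and g'_le: "\<And>x. x \<in> {a..b} \<Longrightarrow> \<bar>g' x\<bar> \<le> B"
    and X_osc: "\<And>x. x \<in> {a..b} \<Longrightarrow> \<bar>X b - X x\<bar> \<le> e"
  shows "\<bar>(g b - g a) * X b - integral {a..b} (\<lambda>r. g' r * X r)\<bar> \<le> B * e * (b - a)"
proof -
  have "(g' has_integral (g b - g a)) {a..b}"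
    using \<open>a \<le> b\<close> deriv
    by (intro fundamental_theorem_of_calculus)
      (auto simp: has_real_derivative_iff_has_vector_derivative[symmetric]
        intro: has_field_derivative_at_within)
  then have "(g b - g a) * X b - integral {a..b} (\<lambda>r. g' r * X r)
      = integral {a..b} (\<lambda>r. g' r * X b) - integral {a..b} (\<lambda>r. g' r * X r)"
    by (simp add: integral_unique has_integral_mult_left)
  also have "\<dots> = integral {a..b} (\<lambda>r. g' r * (X b - X r))"
    using g' X
    by (subst integral_diff[symmetric])
      (auto intro!: integrable_continuous_interval continuous_intros simp: right_diff_distrib)
  finally have eq: "(g b - g a) * X b - integral {a..b} (\<lambda>r. g' r * X r)
      = integral {a..b} (\<lambda>r. g' r * (X b - X r))" .
  have "0 \<le> B" using g'_le[of a] \<open>a \<le> b\<close> by force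
  have "norm (integral {a..b} (\<lambda>r. g' r * (X b - X r))) \<le> B * e * (b - a)"
  proof (rule integral_bound[OF \<open>a \<le> b\<close>])
    show "continuous_on {a..b} (\<lambda>r. g' r * (X b - X r))"
      using g' X by (auto intro!: continuous_intros)
    show "norm (g' x * (X b - X x)) \<le> B * e" if "x \<in> {a..b}" for x
      using g'_le[OF that] X_osc[OF that] \<open>0 \<le> B\<close> by (simp add: abs_mult mult_mono)
  qed
  then show ?thesis unfolding eq by simp
qed

lemma grid_sum_integral_error_le:
  fixes g g' X :: "real \<Rightarrow> real"
  assumes "s < t" "0 < n" and X: "continuous_on {s..t} X" and g': "continuous_on UNIV g'"
    and deriv: "\<And>x. (g has_real_derivative g' x) (at x)"
    and B: "\<And>x. x \<in> {s..t} \<Longrightarrow> \<bar>g' x\<bar> \<le> B"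
    and X_osc: "\<And>x y. x \<in> {s..t} \<Longrightarrow> y \<in> {s..t} \<Longrightarrow> \<bar>y - x\<bar> \<le> (t - s) / real n
      \<Longrightarrow> \<bar>X y - X x\<bar> \<le> e"
  defines "r \<equiv> \<lambda>j. s + real j * ((t - s) / real n)"
  shows "\<bar>(\<Sum>j<n. (g (r (Suc j)) - g (r j)) * X (r (Suc j))) - integral {s..t} (\<lambda>r. g' r * X r)\<bar>
    \<le> B * e * (t - s)"
proof -
  have mono: "r j \<le> r (Suc j)" for j
  proof -
    have "real j * ((t - s) / real n) \<le> real (Suc j) * ((t - s) / real n)"
      using \<open>s < t\<close> by (intro mult_right_mono) auto
    then show ?thesis by (simp add: r_def)
  qed
  have step: "r (Suc j) - r j = (t - s) / real n" for j
    by (simp add: r_def algebra_simps add_divide_distrib[symmetric])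
  have r_in: "r j \<in> {s..t}" if "j \<le> n" for j
  proof -
    have "real j * ((t - s) / real n) \<le> real n * ((t - s) / real n)"
      using that \<open>s < t\<close> by (intro mult_right_mono) auto
    then show ?thesis using \<open>s < t\<close> \<open>0 < n\<close> by (auto simp: r_def)
  qed
  have cell: "{r j..r (Suc j)} \<subseteq> {s..t}" if "j < n" for j
    using r_in[of j] r_in[of "Suc j"] that by auto
  have "continuous_on {s..t} g'" using g' by (rule continuous_on_subset) simp
  then have "continuous_on {s..t} (\<lambda>r. g' r * X r)" using X by (rule continuous_on_mult)
  moreover have "r 0 = s" "r n = t" using \<open>0 < n\<close> by (simp_all add: r_def)
  ultimately have split: "integral {s..t} (\<lambda>r. g' r * X r) = (\<Sum>j<n. integral {r j..r (Suc j)} (\<lambda>r. g' r * X r))"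
    using integral_grid_sum[where r=r and f="\<lambda>r. g' r * X r" and m=n, OF mono] by simp
  have cell_error: "\<bar>(g (r (Suc j)) - g (r j)) * X (r (Suc j)) - integral {r j..r (Suc j)} (\<lambda>r. g' r * X r)\<bar>
      \<le> B * e * ((t - s) / real n)" if "j < n" for j
  proof -
    have "continuous_on {r j..r (Suc j)} g'" using g' by (rule continuous_on_subset) simp
    moreover have "continuous_on {r j..r (Suc j)} X" using X cell[OF that] by (rule continuous_on_subset)
    moreover have "\<bar>g' x\<bar> \<le> B" if "x \<in> {r j..r (Suc j)}" for x
      using B cell[OF \<open>j < n\<close>] that by blast
    moreover have "\<bar>X (r (Suc j)) - X x\<bar> \<le> e" if "x \<in> {r j..r (Suc j)}" for x
      using X_osc[of x "r (Suc j)"] cell[OF \<open>j < n\<close>] that step[of j] by auto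
    ultimately show ?thesis
      using riemann_cell_error_le[OF mono deriv] unfolding step by blast
  qed
  have "\<bar>(\<Sum>j<n. (g (r (Suc j)) - g (r j)) * X (r (Suc j))) - integral {s..t} (\<lambda>r. g' r * X r)\<bar>
      \<le> (\<Sum>j<n. \<bar>(g (r (Suc j)) - g (r j)) * X (r (Suc j)) - integral {r j..r (Suc j)} (\<lambda>r. g' r * X r)\<bar>)"
    unfolding split by (simp only: sum_subtractf[symmetric]) (rule sum_abs)
  also have "\<dots> \<le> (\<Sum>j<n. B * e * ((t - s) / real n))"
    using cell_error by (intro sum_mono) auto
  also have "\<dots> = B * e * (t - s)"
    using \<open>0 < n\<close> by simp
  finally show ?thesis .
qed

lemma grid_sum_tendsto_integral:
  fixes g g' X :: "real \<Rightarrow> real"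
  assumes "s < t" and X: "continuous_on {s..t} X" and g': "continuous_on UNIV g'"
    and deriv: "\<And>x. (g has_real_derivative g' x) (at x)"
  defines "r \<equiv> \<lambda>n j. s + real j * ((t - s) / real n)"
  shows "(\<lambda>n. \<Sum>j<n. (g (r n (Suc j)) - g (r n j)) * X (r n (Suc j)))
    \<longlonglongrightarrow> integral {s..t} (\<lambda>r. g' r * X r)"
proof (rule LIMSEQ_I)
  fix e :: real assume "0 < e"
  obtain B where B: "\<And>x. x \<in> {s..t} \<Longrightarrow> \<bar>g' x\<bar> \<le> B"
  proof -
    have "bounded (g' ` {s..t})"
      by (intro compact_imp_bounded compact_continuous_image continuous_on_subset[OF g']) auto
    then show ?thesis using that by (force simp: bounded_iff)
  qed
  have "0 \<le> B" using B[of s] \<open>s < t\<close> by force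
  define e' where "e' = e / ((B + 1) * (t - s + 1))"
  have "0 < e'" using \<open>0 < e\<close> \<open>0 \<le> B\<close> \<open>s < t\<close> by (simp add: e'_def)
  have "B * e' * (t - s) = e * (B * (t - s)) / ((B + 1) * (t - s + 1))"
    by (simp add: e'_def)
  also have "\<dots> < e"
  proof -
    have "B * (t - s) < (B + 1) * (t - s + 1)" using \<open>0 \<le> B\<close> \<open>s < t\<close> by (simp add: algebra_simps)
    then have "e * (B * (t - s)) < e * ((B + 1) * (t - s + 1))" using \<open>0 < e\<close> by simp
    moreover have "0 < (B + 1) * (t - s + 1)" using \<open>0 \<le> B\<close> \<open>s < t\<close> by simp
    ultimately show ?thesis by (simp add: pos_divide_less_eq)
  qed
  finally have "B * e' * (t - s) < e" .
  obtain d where "0 < d"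
    and d: "\<And>x y. x \<in> {s..t} \<Longrightarrow> y \<in> {s..t} \<Longrightarrow> dist y x < d \<Longrightarrow> dist (X y) (X x) < e'"
    using compact_uniformly_continuous[OF X compact_Icc] \<open>0 < e'\<close>
    unfolding uniformly_continuous_on_def by metis
  obtain N0 :: nat where N0: "(t - s) / d < real N0" using reals_Archimedean2 by blast
  have "norm ((\<Sum>j<n. (g (r n (Suc j)) - g (r n j)) * X (r n (Suc j)))
      - integral {s..t} (\<lambda>r. g' r * X r)) < e" if "Suc N0 \<le> n" for n
  proof -
    have "0 < n" using that by simp
    have "real N0 < real n" using that by simp
    then have "(t - s) / d < real n" using N0 by linarith
    then have "(t - s) / real n < d"
      using \<open>0 < d\<close> \<open>0 < n\<close> by (simp add: field_simps)
    then have "\<bar>X y - X x\<bar> \<le> e'"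
      if "x \<in> {s..t}" "y \<in> {s..t}" "\<bar>y - x\<bar> \<le> (t - s) / real n" for x y
      using d[OF that(1,2)] that(3) by (force simp: dist_real_def)
    from grid_sum_integral_error_le[OF \<open>s < t\<close> \<open>0 < n\<close> X g' deriv B this]
    show ?thesis using \<open>B * e' * (t - s) < e\<close> unfolding r_def by simp
  qed
  then show "\<exists>no. \<forall>n\<ge>no. norm ((\<Sum>j<n. (g (r n (Suc j)) - g (r n j)) * X (r n (Suc j)))
      - integral {s..t} (\<lambda>r. g' r * X r)) < e"
    by blast
qed

lemma riemann_sum_tendsto_path_int:
  fixes g g' :: "real \<Rightarrow> real"
  assumes "s < t" and X: "continuous_on {s..t} (\<lambda>r. X r \<omega>)" and g': "continuous_on UNIV g'"
    and deriv: "\<And>x. (g has_real_derivative g' x) (at x)"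
  shows "(\<lambda>n. riemann_sum g s t n (\<lambda>r. X r \<omega>)) \<longlonglongrightarrow> path_int g X s t \<omega>"
proof -
  define D where "D n = (\<Sum>j<n. (g (s + real (Suc j) * ((t - s) / real n))
      - g (s + real j * ((t - s) / real n))) * X (s + real (Suc j) * ((t - s) / real n)) \<omega>)" for n
  have "deriv g = g'" using deriv by (auto intro: DERIV_imp_deriv)
  have "(\<lambda>n. g t * X t \<omega> - g s * X s \<omega> - D n) \<longlonglongrightarrow> path_int g X s t \<omega>"
    unfolding path_int_def D_def \<open>deriv g = g'\<close>
    by (intro tendsto_diff tendsto_const grid_sum_tendsto_integral[OF assms])
  moreover have "\<forall>\<^sub>F n in sequentially. g t * X t \<omega> - g s * X s \<omega> - D n = riemann_sum g s t n (\<lambda>r. X r \<omega>)"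
  proof (rule eventually_sequentiallyI[of 1])
    fix n :: nat assume "1 \<le> n"
    then show "g t * X t \<omega> - g s * X s \<omega> - D n = riemann_sum g s t n (\<lambda>r. X r \<omega>)"
      using sum_by_parts[of "\<lambda>j. g (s + real j * ((t - s) / real n))"
          "\<lambda>j. X (s + real j * ((t - s) / real n)) \<omega>" n]
      by (simp add: D_def riemann_sum_def)
  qed
  ultimately show ?thesis by (rule Lim_transform_eventually)
qed

lemma path_int_measurable:
  assumes X_meas: "\<And>r. 0 \<le> r \<Longrightarrow> X r \<in> borel_measurable M"
    and X_cont: "\<And>\<omega>. \<omega> \<in> space M \<Longrightarrow> continuous_on {0..} (\<lambda>r. X r \<omega>)"
    and "0 \<le> s" "s < t" and "continuous_on UNIV g'" and "\<And>x. (g has_real_derivative g' x) (at x)"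
  shows "(\<lambda>\<omega>. path_int g X s t \<omega>) \<in> borel_measurable M"
proof (rule borel_measurable_LIMSEQ_real)
  show "(\<lambda>n. riemann_sum g s t n (\<lambda>r. X r \<omega>)) \<longlonglongrightarrow> path_int g X s t \<omega>" if "\<omega> \<in> space M" for \<omega>
    using X_cont[OF that] assms(3-6)
    by (intro riemann_sum_tendsto_path_int) (auto elim: continuous_on_subset)
  show "(\<lambda>\<omega>. riemann_sum g s t n (\<lambda>r. X r \<omega>)) \<in> borel_measurable M" for n
    unfolding riemann_sum_def using assms(3,4)
    by (auto intro!: borel_measurable_sum borel_measurable_times borel_measurable_diff X_meas)
qed

lemma fbm_path_int_second_moment_le:
  fixes X :: "real \<Rightarrow> 'w \<Rightarrow> real"
  assumes "prob_space M" and fbm: "is_fbm M H X" and H: "0 < H" "H < 1/2"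
    and "0 \<le> s" "s < t" and N: "1 \<le> N"
    and deriv: "\<And>x. (g has_real_derivative g' x) (at x)" and g': "continuous_on UNIV g'"
    and bounded: "\<And>x. x \<in> {s..t} \<Longrightarrow> \<bar>g x\<bar> \<le> G" and lipschitz: "L-lipschitz_on {s..t} g"
  defines "h \<equiv> (t - s) / real N"
  shows "(\<integral>\<^sup>+ \<omega>. ennreal ((path_int g X s t \<omega>)\<^sup>2) \<partial>M)
    \<le> ennreal (2 * real N * h powr (2*H) * (G + L * h)\<^sup>2)"
proof -
  have gauss: "centered_gaussian_family M X {0..} (fbm_cov H)"
    and cont: "\<And>\<omega>. \<omega> \<in> space M \<Longrightarrow> continuous_on {0..} (\<lambda>r. X r \<omega>)"
    using fbm unfolding is_fbm_def by auto
  note psd = cov_form_gaussian(1)[OF assms(1) gauss]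
  have "0 < h" using \<open>s < t\<close> N by (simp add: h_def)
  have t: "s + real N * h = t" using N by (simp add: h_def)
  define RS where "RS k = riemann_sum g s t (N * Suc k)" for k
  have pf_RS: "point_functional (RS k)" for k
    unfolding RS_def using \<open>0 \<le> s\<close> \<open>s < t\<close> by (intro point_functional_riemann_sum) auto
  have RS_cov: "cov_form (fbm_cov H) (RS k) (RS k) \<le> 2 * real N * h powr (2*H) * (G + L * h)\<^sup>2" for k
  proof -
    have "sqrt (cov_form (fbm_cov H) (RS k) (RS k)) \<le> (G + L * h) * sqrt (2 * real N * h powr (2*H))"
      using sqrt_cov_form_riemann_sum_le[OF H psd \<open>0 \<le> s\<close> \<open>0 < h\<close> N, of "Suc k" g G L] bounded lipschitz
      unfolding t RS_def by auto
    then have "(sqrt (cov_form (fbm_cov H) (RS k) (RS k)))\<^sup>2 \<le> ((G + L * h) * sqrt (2 * real N * h powr (2*H)))\<^sup>2"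
      using psd[OF pf_RS] by (intro power_mono) auto
    then show ?thesis
      using psd[OF pf_RS] by (simp add: power_mult_distrib mult.commute)
  qed
  show ?thesis
  proof (rule nn_integral_le_of_tendsto[where f="\<lambda>k \<omega>. ennreal ((RS k (\<lambda>r. X r \<omega>))\<^sup>2)"])
    show "(\<lambda>\<omega>. ennreal ((RS k (\<lambda>r. X r \<omega>))\<^sup>2)) \<in> borel_measurable M" for k
      using cov_form_gaussian(2)[OF assms(1) gauss pf_RS] by measurable
    show "(\<lambda>k. ennreal ((RS k (\<lambda>r. X r \<omega>))\<^sup>2)) \<longlonglongrightarrow> ennreal ((path_int g X s t \<omega>)\<^sup>2)"
      if "\<omega> \<in> space M" for \<omega>
    proof -
      have "(\<lambda>n. riemann_sum g s t n (\<lambda>r. X r \<omega>)) \<longlonglongrightarrow> path_int g X s t \<omega>"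
        using cont[OF that] \<open>0 \<le> s\<close> \<open>s < t\<close> g' deriv
        by (intro riemann_sum_tendsto_path_int) (auto elim: continuous_on_subset)
      from LIMSEQ_subseq_LIMSEQ[OF this, of "\<lambda>k. N * Suc k"] N
      have "(\<lambda>k. RS k (\<lambda>r. X r \<omega>)) \<longlonglongrightarrow> path_int g X s t \<omega>"
        by (simp add: RS_def o_def strict_mono_def)
      then show ?thesis by (intro tendsto_ennrealI tendsto_power)
    qed
    show "(\<integral>\<^sup>+ \<omega>. ennreal ((RS k (\<lambda>r. X r \<omega>))\<^sup>2) \<partial>M)
        \<le> ennreal (2 * real N * h powr (2*H) * (G + L * h)\<^sup>2)" for k
      using cov_form_gaussian(3)[OF assms(1) gauss pf_RS] RS_cov[of k] ennreal_leI order_trans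
      by blast
  qed
qed

section \<open>Oscillatory integrands\<close>

lemma lipschitz_on_sin: "1-lipschitz_on S (sin :: real \<Rightarrow> real)"
proof (rule lipschitz_onI)
  fix x y :: real
  have "\<bar>sin x - sin y\<bar> = 2 * \<bar>sin ((x - y) / 2)\<bar> * \<bar>cos ((x + y) / 2)\<bar>"
    by (simp add: sin_diff_sin abs_mult)
  also have "\<dots> \<le> 2 * (\<bar>x - y\<bar> / 2) * 1"
    using abs_sin_x_le_abs_x[of "(x - y) / 2"] by (intro mult_mono) auto
  finally show "dist (sin x) (sin y) \<le> 1 * dist x y" by (simp add: dist_real_def)
qed simp

lemma lipschitz_on_cos: "1-lipschitz_on S (cos :: real \<Rightarrow> real)"
proof (rule lipschitz_onI)
  fix x y :: real
  have "\<bar>cos x - cos y\<bar> = 2 * \<bar>sin ((x + y) / 2)\<bar> * \<bar>sin ((y - x) / 2)\<bar>"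
    by (simp add: cos_diff_cos abs_mult)
  also have "\<dots> \<le> 2 * 1 * (\<bar>x - y\<bar> / 2)"
    using abs_sin_x_le_abs_x[of "(y - x) / 2"] by (intro mult_mono) (auto simp: abs_minus_commute)
  finally show "dist (cos x) (cos y) \<le> 1 * dist x y" by (simp add: dist_real_def)
qed simp

lemma oscillatory_integrand_deriv:
  fixes w w' :: "real \<Rightarrow> real"
  assumes dw: "\<And>x. (w has_real_derivative w' x) (at x)" and w': "continuous_on UNIV w'"
  shows "((\<lambda>r. a * w (\<mu> * (t - r))) has_real_derivative a * (w' (\<mu> * (t - r)) * - \<mu>)) (at r)"
    and "continuous_on UNIV (\<lambda>r. a * (w' (\<mu> * (t - r)) * - \<mu>))"
proof -
  show "((\<lambda>r. a * w (\<mu> * (t - r))) has_real_derivative a * (w' (\<mu> * (t - r)) * - \<mu>)) (at r)"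
    by (intro DERIV_cmult DERIV_chain2[OF dw] derivative_eq_intros) auto
  show "continuous_on UNIV (\<lambda>r. a * (w' (\<mu> * (t - r)) * - \<mu>))"
    by (intro continuous_intros continuous_on_compose2[OF w']) auto
qed

lemma lipschitz_on_oscillatory_integrand:
  assumes "1-lipschitz_on UNIV w" and "0 \<le> \<mu>"
  shows "(\<bar>a\<bar> * \<mu>)-lipschitz_on S (\<lambda>r. a * w (\<mu> * (t - r)))"
proof (rule lipschitz_onI)
  fix x y
  have "\<mu> * (t - x) - \<mu> * (t - y) = \<mu> * (y - x)"
    by (simp add: algebra_simps)
  then have phase: "dist (\<mu> * (t - x)) (\<mu> * (t - y)) = \<mu> * dist x y"
    using \<open>0 \<le> \<mu>\<close> by (simp add: dist_real_def abs_mult abs_minus_commute)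
  have "dist (a * w (\<mu> * (t - x))) (a * w (\<mu> * (t - y)))
      = \<bar>a\<bar> * dist (w (\<mu> * (t - x))) (w (\<mu> * (t - y)))"
    by (simp add: dist_real_def abs_mult flip: right_diff_distrib)
  also have "\<dots> \<le> \<bar>a\<bar> * (1 * dist (\<mu> * (t - x)) (\<mu> * (t - y)))"
    using lipschitz_onD[OF assms(1)] by (intro mult_left_mono) auto
  finally show "dist (a * w (\<mu> * (t - x))) (a * w (\<mu> * (t - y))) \<le> \<bar>a\<bar> * \<mu> * dist x y"
    by (simp add: phase mult.assoc)
qed (use \<open>0 \<le> \<mu>\<close> in simp)

lemma fbm_oscillatory_path_int_measurable:
  assumes "is_fbm M H X" and "0 \<le> s" "s < t"
    and "\<And>x. (w has_real_derivative w' x) (at x)" and "continuous_on UNIV w'"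
  shows "(\<lambda>\<omega>. path_int (\<lambda>r. a * w (\<mu> * (t - r))) X s t \<omega>) \<in> borel_measurable M"
  using assms(1) unfolding is_fbm_def centered_gaussian_family_def
  by (intro path_int_measurable[OF _ _ assms(2,3) oscillatory_integrand_deriv(2,1)[OF assms(4,5)]]) auto

text \<open>Blocks of length about 1/\<mu>: as many as needed to resolve the oscillation, but no more.\<close>
lemma block_count_exists:
  fixes p \<mu> \<mu>0 \<epsilon> T :: real
  assumes p: "0 < p" "p < 1" and \<mu>: "0 < \<mu>0" "\<mu>0 \<le> \<mu>" and \<epsilon>: "0 < \<epsilon>" "\<epsilon> \<le> T"
  obtains N :: nat where "1 \<le> N" and "\<mu> * (\<epsilon> / real N) \<le> 1"
    and "real N * (\<epsilon> / real N) powr p \<le> (2 * T + 1 / \<mu>0) * \<mu> powr (1 - p)"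
proof (cases "\<mu> * \<epsilon> \<le> 1")
  case True
  have "0 < \<mu>" using \<mu> by simp
  have "\<epsilon> powr p \<le> (1 / \<mu>) powr p"
    using \<epsilon> True \<open>0 < \<mu>\<close> p by (intro powr_mono2) (auto simp: field_simps)
  also have "\<dots> = 1 / \<mu> * \<mu> powr (1 - p)"
    using \<open>0 < \<mu>\<close> by (simp add: powr_diff powr_divide)
  also have "\<dots> \<le> (2 * T + 1 / \<mu>0) * \<mu> powr (1 - p)"
  proof (rule mult_right_mono)
    have "1 / \<mu> \<le> 1 / \<mu>0" using \<mu> by (intro divide_left_mono) auto
    then show "1 / \<mu> \<le> 2 * T + 1 / \<mu>0" using \<epsilon> by simp
  qed simp
  finally show ?thesis using that[of 1] True by simp
next
  case False
  have "0 < \<mu>" using \<mu> by simp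
  define N where "N = nat \<lceil>\<mu> * \<epsilon>\<rceil>"
  have N_ge: "\<mu> * \<epsilon> \<le> real N" and N_le: "real N \<le> 2 * (\<mu> * \<epsilon>)"
    unfolding N_def using False by linarith+
  then have "1 \<le> N" "0 < real N" using False by linarith+
  define h where "h = \<epsilon> / real N"
  have "0 < h" using \<epsilon> \<open>0 < real N\<close> by (simp add: h_def)
  have "\<mu> * h \<le> 1" using N_ge \<open>0 < real N\<close> by (simp add: h_def field_simps)
  have "1 / (2 * \<mu>) \<le> h" using N_le \<open>0 < \<mu>\<close> \<open>0 < real N\<close> by (simp add: h_def field_simps)
  have "real N * h powr p = \<epsilon> * h powr (p - 1)"
    using \<open>0 < h\<close> \<open>0 < real N\<close> \<epsilon> by (simp add: powr_diff h_def)
  also have "\<dots> \<le> T * (1 / (2 * \<mu>)) powr (p - 1)"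
    using \<epsilon> \<open>1 / (2 * \<mu>) \<le> h\<close> \<open>0 < \<mu>\<close> p by (intro mult_mono powr_mono2') auto
  also have "(1 / (2 * \<mu>)) powr (p - 1) = 2 powr (1 - p) * \<mu> powr (1 - p)"
    using \<open>0 < \<mu>\<close> by (simp add: powr_divide powr_mult powr_diff)
  also have "T * (2 powr (1 - p) * \<mu> powr (1 - p)) \<le> (2 * T + 1 / \<mu>0) * \<mu> powr (1 - p)"
  proof -
    have "2 powr (1 - p) \<le> (2::real)" using powr_mono[of "1 - p" 1 2] p by simp
    then have "T * 2 powr (1 - p) \<le> 2 * T" using \<epsilon> by (simp add: mult.commute mult_right_mono)
    moreover have "0 \<le> 1 / \<mu>0" using \<mu> by simp
    ultimately have "T * 2 powr (1 - p) \<le> 2 * T + 1 / \<mu>0" by linarith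
    then show ?thesis by (simp add: mult.assoc[symmetric] mult_right_mono)
  qed
  finally show ?thesis using that \<open>1 \<le> N\<close> \<open>\<mu> * h \<le> 1\<close> by (simp add: h_def)
qed

lemma fbm_oscillatory_integral_le:
  fixes X :: "real \<Rightarrow> 'w \<Rightarrow> real" and w w' :: "real \<Rightarrow> real"
  assumes "prob_space M" "is_fbm M H X" "0 < H" "H < 1/2"
    and "0 \<le> s" "s < t" "t \<le> T" and \<mu>: "0 < \<mu>0" "\<mu>0 \<le> \<mu>"
    and w_le: "\<And>x. \<bar>w x\<bar> \<le> 1" and w: "1-lipschitz_on UNIV w"
    and dw: "\<And>x. (w has_real_derivative w' x) (at x)" and w': "continuous_on UNIV w'"
  shows "(\<integral>\<^sup>+ \<omega>. ennreal ((path_int (\<lambda>r. a * w (\<mu> * (t - r))) X s t \<omega>)\<^sup>2) \<partial>M)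
    \<le> ennreal (8 * a\<^sup>2 * (2 * T + 1 / \<mu>0) * \<mu> powr (1 - 2*H))"
proof -
  obtain N where N: "1 \<le> N" "\<mu> * ((t - s) / real N) \<le> 1"
    and N_pow: "real N * ((t - s) / real N) powr (2*H) \<le> (2 * T + 1 / \<mu>0) * \<mu> powr (1 - 2*H)"
    using block_count_exists[of "2*H" \<mu>0 \<mu> "t - s" T] assms by auto
  define h where "h = (t - s) / real N"
  have "0 \<le> \<mu>" using \<mu> by simp
  have "(\<integral>\<^sup>+ \<omega>. ennreal ((path_int (\<lambda>r. a * w (\<mu> * (t - r))) X s t \<omega>)\<^sup>2) \<partial>M)
      \<le> ennreal (2 * real N * h powr (2*H) * (\<bar>a\<bar> + \<bar>a\<bar> * \<mu> * h)\<^sup>2)"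
    unfolding h_def
  proof (rule fbm_path_int_second_moment_le[OF assms(1-6) N(1) oscillatory_integrand_deriv[OF dw w'] _
        lipschitz_on_oscillatory_integrand[OF w \<open>0 \<le> \<mu>\<close>]])
    show "\<bar>a * w (\<mu> * (t - x))\<bar> \<le> \<bar>a\<bar>" if "x \<in> {s..t}" for x
      using w_le[of "\<mu> * (t - x)"] by (simp add: abs_mult mult_left_le)
  qed
  also have "\<dots> \<le> ennreal (8 * a\<^sup>2 * (2 * T + 1 / \<mu>0) * \<mu> powr (1 - 2*H))"
  proof (rule ennreal_leI)
    have "0 \<le> h" using \<open>s < t\<close> by (simp add: h_def)
    have "\<bar>a\<bar> * (\<mu> * h) \<le> \<bar>a\<bar>"
      unfolding h_def by (rule mult_left_le[OF N(2)]) simp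
    then have "(\<bar>a\<bar> + \<bar>a\<bar> * \<mu> * h)\<^sup>2 \<le> (2 * \<bar>a\<bar>)\<^sup>2"
      using \<open>0 \<le> \<mu>\<close> \<open>0 \<le> h\<close> by (intro power_mono) (auto simp: mult.assoc)
    then have "(\<bar>a\<bar> + \<bar>a\<bar> * \<mu> * h)\<^sup>2 \<le> 4 * a\<^sup>2"
      by (simp add: power_mult_distrib)
    then have "2 * real N * h powr (2*H) * (\<bar>a\<bar> + \<bar>a\<bar> * \<mu> * h)\<^sup>2
        \<le> 2 * real N * h powr (2*H) * (4 * a\<^sup>2)"
      by (intro mult_left_mono) auto
    also have "\<dots> = 8 * a\<^sup>2 * (real N * h powr (2*H))" by simp
    also have "\<dots> \<le> 8 * a\<^sup>2 * ((2 * T + 1 / \<mu>0) * \<mu> powr (1 - 2*H))"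
      using N_pow by (intro mult_left_mono) (auto simp: h_def)
    finally show "2 * real N * h powr (2*H) * (\<bar>a\<bar> + \<bar>a\<bar> * \<mu> * h)\<^sup>2
        \<le> 8 * a\<^sup>2 * (2 * T + 1 / \<mu>0) * \<mu> powr (1 - 2*H)"
      by (simp add: ac_simps)
  qed
  finally show ?thesis .
qed

text \<open>A single block suffices on short intervals, where |w x| \<le> |x| makes the integrand
  of size \<mu>(t - s).\<close>
lemma fbm_oscillatory_integral_short_le:
  fixes X :: "real \<Rightarrow> 'w \<Rightarrow> real" and w w' :: "real \<Rightarrow> real"
  assumes "prob_space M" "is_fbm M H X" "0 < H" "H < 1/2" and "0 \<le> s" "s < t" and "0 \<le> \<mu>"
    and w_le: "\<And>x. \<bar>w x\<bar> \<le> \<bar>x\<bar>" and w: "1-lipschitz_on UNIV w"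
    and dw: "\<And>x. (w has_real_derivative w' x) (at x)" and w': "continuous_on UNIV w'"
  shows "(\<integral>\<^sup>+ \<omega>. ennreal ((path_int (\<lambda>r. a * w (\<mu> * (t - r))) X s t \<omega>)\<^sup>2) \<partial>M)
    \<le> ennreal (8 * a\<^sup>2 * (\<mu> * (t - s))\<^sup>2 * (t - s) powr (2*H))"
proof -
  have "\<bar>a * w (\<mu> * (t - r))\<bar> \<le> \<bar>a\<bar> * \<mu> * (t - s)" if "r \<in> {s..t}" for r
  proof -
    have "\<bar>\<mu> * (t - r)\<bar> \<le> \<mu> * (t - s)"
      using that \<open>0 \<le> \<mu>\<close> by (simp add: abs_mult mult_left_mono)
    then have "\<bar>w (\<mu> * (t - r))\<bar> \<le> \<mu> * (t - s)"
      using w_le[of "\<mu> * (t - r)"] by linarith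
    then show ?thesis by (simp add: abs_mult mult_left_mono mult.assoc)
  qed
  then have "(\<integral>\<^sup>+ \<omega>. ennreal ((path_int (\<lambda>r. a * w (\<mu> * (t - r))) X s t \<omega>)\<^sup>2) \<partial>M)
      \<le> ennreal (2 * real (1::nat) * ((t - s) / real (1::nat)) powr (2*H)
          * (\<bar>a\<bar> * \<mu> * (t - s) + \<bar>a\<bar> * \<mu> * ((t - s) / real (1::nat)))\<^sup>2)"
    by (rule fbm_path_int_second_moment_le[OF assms(1-6) order_refl oscillatory_integrand_deriv[OF dw w'] _
          lipschitz_on_oscillatory_integrand[OF w \<open>0 \<le> \<mu>\<close>]])
  also have "\<dots> = ennreal (8 * a\<^sup>2 * (\<mu> * (t - s))\<^sup>2 * (t - s) powr (2*H))"
  proof -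
    have "\<bar>a\<bar> * \<mu> * (t - s) + \<bar>a\<bar> * \<mu> * ((t - s) / real (1::nat)) = 2 * \<bar>a\<bar> * (\<mu> * (t - s))"
      by simp
    then show ?thesis by (simp add: power_mult_distrib)
  qed
  finally show ?thesis .
qed

text \<open>Interpolates between the two previous bounds, switching at \<mu>(t - s) = 1.\<close>
lemma short_time_factor_le:
  fixes \<mu> \<epsilon> H P :: real
  assumes "0 < \<mu>" "0 < \<epsilon>" "\<mu> * \<epsilon> \<le> 1" "0 \<le> H" "P \<le> 2"
  shows "(\<mu> * \<epsilon>)\<^sup>2 * \<epsilon> powr (2*H) \<le> 1 / \<mu> * \<mu> powr (1 - 2*H) * (\<mu> * \<epsilon>) powr P"
proof -
  define x where "x = \<mu> * \<epsilon>"
  have "0 < x" using assms by (simp add: x_def)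
  have "x powr (2 + 2*H) = x powr 2 * x powr (2*H)" by (rule powr_add)
  also have "x powr 2 = x\<^sup>2" using \<open>0 < x\<close> by (simp add: powr_numeral)
  also have "x powr (2*H) = \<mu> powr (2*H) * \<epsilon> powr (2*H)"
    unfolding x_def using assms by (simp add: powr_mult)
  finally have "x\<^sup>2 * \<epsilon> powr (2*H) = \<mu> powr (- (2*H)) * x powr (2 + 2*H)"
    using assms by (simp add: powr_minus field_simps)
  also have "\<dots> \<le> \<mu> powr (- (2*H)) * x powr P"
    using assms \<open>0 < x\<close> by (intro mult_left_mono powr_mono') (auto simp: x_def)
  also have "\<dots> = 1 / \<mu> * \<mu> powr (1 - 2*H) * x powr P"
    using assms by (simp add: powr_diff powr_minus field_simps)
  finally show ?thesis unfolding x_def .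
qed

lemma fbm_sine_integral_le:
  fixes X :: "real \<Rightarrow> 'w \<Rightarrow> real"
  assumes "prob_space M" "is_fbm M H X" "0 < H" "H < 1/2"
    and "0 \<le> s" "s < t" "t \<le> T" and \<mu>: "0 < \<mu>0" "\<mu>0 \<le> \<mu>" and P: "0 < P" "P \<le> 2"
  shows "(\<integral>\<^sup>+ \<omega>. ennreal ((path_int (\<lambda>r. a * sin (\<mu> * (t - r))) X s t \<omega>)\<^sup>2) \<partial>M)
    \<le> ennreal (8 * a\<^sup>2 * (2 * T + 1 / \<mu>0) * \<mu> powr (1 - 2*H) * (\<mu> * (t - s)) powr P)"
proof -
  have "0 < \<mu>" using \<mu> by simp
  define x where "x = \<mu> * (t - s)"
  have "0 \<le> T" using \<open>0 \<le> s\<close> \<open>s < t\<close> \<open>t \<le> T\<close> by simp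
  have "1 / \<mu> \<le> 1 / \<mu>0" using \<mu> by (intro divide_left_mono) auto
  then have inv_\<mu>: "1 / \<mu> \<le> 2 * T + 1 / \<mu>0" using \<open>0 \<le> T\<close> by simp
  have K: "0 \<le> 2 * T + 1 / \<mu>0" using \<mu> \<open>0 \<le> T\<close> by simp
  show ?thesis
  proof (cases "x \<le> 1")
    case True
    have "(\<mu> * (t - s))\<^sup>2 * (t - s) powr (2*H) \<le> 1 / \<mu> * \<mu> powr (1 - 2*H) * x powr P"
      unfolding x_def using \<open>0 < \<mu>\<close> \<open>s < t\<close> True \<open>0 < H\<close> P
      by (intro short_time_factor_le) (auto simp: x_def)
    also have "\<dots> \<le> (2 * T + 1 / \<mu>0) * \<mu> powr (1 - 2*H) * x powr P"
      using inv_\<mu> by (intro mult_right_mono) auto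
    finally have "8 * a\<^sup>2 * (\<mu> * (t - s))\<^sup>2 * (t - s) powr (2*H)
        \<le> 8 * a\<^sup>2 * ((2 * T + 1 / \<mu>0) * \<mu> powr (1 - 2*H) * x powr P)"
      by (simp add: mult.assoc mult_left_mono)
    moreover have "(\<integral>\<^sup>+ \<omega>. ennreal ((path_int (\<lambda>r. a * sin (\<mu> * (t - r))) X s t \<omega>)\<^sup>2) \<partial>M)
        \<le> ennreal (8 * a\<^sup>2 * (\<mu> * (t - s))\<^sup>2 * (t - s) powr (2*H))"
      using \<open>0 < \<mu>\<close> abs_sin_x_le_abs_x
      by (intro fbm_oscillatory_integral_short_le[OF assms(1-6) _ _ lipschitz_on_sin DERIV_sin
            continuous_on_cos[OF continuous_on_id]]) auto
    ultimately show ?thesis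
      by (elim order_trans) (rule ennreal_leI, simp add: x_def ac_simps)
  next
    case False
    have "1 \<le> x powr P" using False P by (simp add: ge_one_powr_ge_zero)
    then have "(2 * T + 1 / \<mu>0) * \<mu> powr (1 - 2*H) \<le> (2 * T + 1 / \<mu>0) * \<mu> powr (1 - 2*H) * x powr P"
      using mult_left_mono[OF \<open>1 \<le> x powr P\<close>, of "(2 * T + 1 / \<mu>0) * \<mu> powr (1 - 2*H)"] K by simp
    then have "8 * a\<^sup>2 * (2 * T + 1 / \<mu>0) * \<mu> powr (1 - 2*H)
        \<le> 8 * a\<^sup>2 * ((2 * T + 1 / \<mu>0) * \<mu> powr (1 - 2*H) * x powr P)"
      by (simp add: mult.assoc mult_left_mono)
    moreover have "(\<integral>\<^sup>+ \<omega>. ennreal ((path_int (\<lambda>r. a * sin (\<mu> * (t - r))) X s t \<omega>)\<^sup>2) \<partial>M)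
        \<le> ennreal (8 * a\<^sup>2 * (2 * T + 1 / \<mu>0) * \<mu> powr (1 - 2*H))"
      by (intro fbm_oscillatory_integral_le[OF assms(1-7) \<mu> _ lipschitz_on_sin DERIV_sin
            continuous_on_cos[OF continuous_on_id]]) simp
    ultimately show ?thesis
      by (elim order_trans) (rule ennreal_leI, simp add: x_def ac_simps)
  qed
qed

section \<open>Summing over the modes\<close>

lemma E_norm2_le_suminf:
  assumes meas: "\<And>i. (\<lambda>\<omega>. path_int (g i) (\<xi> i) s t \<omega>) \<in> borel_measurable M"
    and bound: "\<And>i. (\<integral>\<^sup>+ \<omega>. ennreal ((path_int (g i) (\<xi> i) s t \<omega>)\<^sup>2) \<partial>M) \<le> ennreal (c * b i)"
    and q: "\<And>i. 0 \<le> q i" and b: "\<And>i. 0 \<le> b i" and "0 \<le> c"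
    and summable: "summable (\<lambda>i. b i * q i)"
  shows "E_norm2 M q \<xi> g s t \<le> ennreal (c * (\<Sum>i. b i * q i))"
proof -
  have "E_norm2 M q \<xi> g s t = (\<Sum>i. \<integral>\<^sup>+ \<omega>. ennreal (q i * (path_int (g i) (\<xi> i) s t \<omega>)\<^sup>2) \<partial>M)"
    unfolding E_norm2_def using meas by (intro nn_integral_suminf) measurable
  also have "\<dots> \<le> (\<Sum>i. ennreal (c * b i * q i))"
  proof (intro suminf_le summableI)
    fix i
    have "(\<integral>\<^sup>+ \<omega>. ennreal (q i * (path_int (g i) (\<xi> i) s t \<omega>)\<^sup>2) \<partial>M)
        = ennreal (q i) * (\<integral>\<^sup>+ \<omega>. ennreal ((path_int (g i) (\<xi> i) s t \<omega>)\<^sup>2) \<partial>M)"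
      using q[of i] meas[of i] by (simp add: ennreal_mult nn_integral_cmult)
    also have "\<dots> \<le> ennreal (q i) * ennreal (c * b i)"
      by (intro mult_left_mono bound) simp
    also have "\<dots> = ennreal (c * b i * q i)"
      using q[of i] b[of i] \<open>0 \<le> c\<close> by (simp add: ennreal_mult[symmetric] mult.commute)
    finally show "(\<integral>\<^sup>+ \<omega>. ennreal (q i * (path_int (g i) (\<xi> i) s t \<omega>)\<^sup>2) \<partial>M)
        \<le> ennreal (c * b i * q i)" .
  qed
  also have "\<dots> = ennreal (\<Sum>i. c * b i * q i)"
    using q b \<open>0 \<le> c\<close> summable_mult[OF summable, of c]
    by (intro suminf_ennreal2) (auto simp: mult.assoc)
  also have "(\<Sum>i. c * b i * q i) = c * (\<Sum>i. b i * q i)"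
    using suminf_mult[OF summable, of c] by (simp add: mult.assoc)
  finally show ?thesis .
qed

lemma E_norm2_same_time: "E_norm2 M q \<xi> g t t = 0"
  unfolding E_norm2_def path_int_def by simp

lemma E_norm2_oscillatory_le:
  fixes \<xi> :: "nat \<Rightarrow> real \<Rightarrow> 'w \<Rightarrow> real" and w w' :: "real \<Rightarrow> real"
  assumes "prob_space M" "\<And>i. is_fbm M H (\<xi> i)" "0 < H" "H < 1/2" "0 \<le> s" "s < t" "t \<le> T"
    and \<mu>: "0 < \<mu>0" "\<And>i. \<mu>0 \<le> \<mu> i"
    and w: "\<And>x. \<bar>w x\<bar> \<le> 1" "1-lipschitz_on UNIV w"
      "\<And>x. (w has_real_derivative w' x) (at x)" "continuous_on UNIV w'"
    and weight: "\<And>i. (a i)\<^sup>2 * \<mu> i powr (1 - 2*H) = b i"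
    and q: "\<And>i. 0 \<le> q i" and summable: "summable (\<lambda>i. b i * q i)"
  shows "E_norm2 M q \<xi> (\<lambda>i r. a i * w (\<mu> i * (t - r))) s t
    \<le> ennreal (8 * (2 * T + 1 / \<mu>0) * (\<Sum>i. b i * q i))"
proof (rule E_norm2_le_suminf)
  show "(\<integral>\<^sup>+ \<omega>. ennreal ((path_int (\<lambda>r. a i * w (\<mu> i * (t - r))) (\<xi> i) s t \<omega>)\<^sup>2) \<partial>M)
      \<le> ennreal (8 * (2 * T + 1 / \<mu>0) * b i)" for i
  proof -
    have eq: "8 * (a i)\<^sup>2 * (2 * T + 1 / \<mu>0) * \<mu> i powr (1 - 2*H) = 8 * (2 * T + 1 / \<mu>0) * b i"
      unfolding weight[of i, symmetric] by (simp only: ac_simps)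
    show ?thesis
      unfolding eq[symmetric]
      by (rule fbm_oscillatory_integral_le[OF assms(1) assms(2)[of i] assms(3-7) \<mu>(1) \<mu>(2)[of i] w])
  qed
  show "0 \<le> b i" for i unfolding weight[of i, symmetric] by simp
  show "0 \<le> 8 * (2 * T + 1 / \<mu>0)" using assms(5-7) \<mu>(1) by simp
qed (use fbm_oscillatory_path_int_measurable[OF assms(2,5,6) w(3,4)] q summable in auto)

lemma E_norm2_sine_le:
  fixes \<xi> :: "nat \<Rightarrow> real \<Rightarrow> 'w \<Rightarrow> real"
  assumes "prob_space M" "\<And>i. is_fbm M H (\<xi> i)" "0 < H" "H < 1/2" "0 \<le> s" "s < t" "t \<le> T"
    and \<mu>: "0 < \<mu>0" "\<And>i. \<mu>0 \<le> \<mu> i" and P: "0 < P" "P \<le> 2"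
    and weight: "\<And>i. (a i)\<^sup>2 * \<mu> i powr (1 - 2*H) * \<mu> i powr P \<le> c * b i"
    and "0 \<le> c" "\<And>i. 0 \<le> b i" "\<And>i. 0 \<le> q i" and "summable (\<lambda>i. b i * q i)"
  shows "E_norm2 M q \<xi> (\<lambda>i r. a i * sin (\<mu> i * (t - r))) s t
    \<le> ennreal (8 * (2 * T + 1 / \<mu>0) * c * (t - s) powr P * (\<Sum>i. b i * q i))"
proof (rule E_norm2_le_suminf)
  have K: "0 \<le> 2 * T + 1 / \<mu>0" using assms(5-7) \<mu>(1) by simp
  show "(\<integral>\<^sup>+ \<omega>. ennreal ((path_int (\<lambda>r. a i * sin (\<mu> i * (t - r))) (\<xi> i) s t \<omega>)\<^sup>2) \<partial>M)
      \<le> ennreal (8 * (2 * T + 1 / \<mu>0) * c * (t - s) powr P * b i)" for i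
  proof (rule order_trans[OF fbm_sine_integral_le[OF assms(1) assms(2)[of i] assms(3-7) \<mu>(1) \<mu>(2)[of i] P] ennreal_leI])
    have "8 * (a i)\<^sup>2 * (2 * T + 1 / \<mu>0) * \<mu> i powr (1 - 2*H) * (\<mu> i * (t - s)) powr P
        = 8 * (2 * T + 1 / \<mu>0) * (t - s) powr P * ((a i)\<^sup>2 * \<mu> i powr (1 - 2*H) * \<mu> i powr P)"
      using \<mu> \<open>s < t\<close> by (simp add: powr_mult ac_simps)
    also have "\<dots> \<le> 8 * (2 * T + 1 / \<mu>0) * (t - s) powr P * (c * b i)"
      using weight[of i] K by (intro mult_left_mono) auto
    finally show "8 * (a i)\<^sup>2 * (2 * T + 1 / \<mu>0) * \<mu> i powr (1 - 2*H) * (\<mu> i * (t - s)) powr P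
        \<le> 8 * (2 * T + 1 / \<mu>0) * c * (t - s) powr P * b i"
      by (simp add: ac_simps)
  qed
  show "0 \<le> 8 * (2 * T + 1 / \<mu>0) * c * (t - s) powr P" using K \<open>0 \<le> c\<close> by simp
qed (use fbm_oscillatory_path_int_measurable[OF assms(2,5,6) DERIV_sin continuous_on_cos[OF continuous_on_id]]
    assms(13-16) in auto)

lemma powr_square_mult_powr_powr:
  assumes "0 < (x::real)"
  shows "(x powr a)\<^sup>2 * (x powr b) powr c = x powr (2 * a + b * c)"
proof -
  have "(x powr a)\<^sup>2 = x powr (2 * a)"
    using assms by (simp add: powr_numeral[symmetric] powr_powr mult.commute)
  then show ?thesis by (simp add: powr_powr powr_add)
qed

lemma powr_le_powr_mult_powr:
  fixes \<mu> \<mu>0 :: real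
  assumes "0 < \<mu>0" "\<mu>0 \<le> \<mu>" "P \<le> \<beta>"
  shows "\<mu> powr P \<le> \<mu>0 powr (P - \<beta>) * \<mu> powr \<beta>"
proof -
  have "\<mu> powr (P - \<beta>) \<le> \<mu>0 powr (P - \<beta>)"
    using assms by (intro powr_mono2') auto
  then have "\<mu> powr (P - \<beta>) * \<mu> powr \<beta> \<le> \<mu>0 powr (P - \<beta>) * \<mu> powr \<beta>"
    by (rule mult_right_mono) simp
  then show ?thesis using assms by (simp add: powr_add[symmetric])
qed

lemma eigenvalue_weight_smooth:
  assumes "0 < (l::real)" and "\<kappa> = \<alpha>/2 + H*\<alpha> + 2*\<rho>"
  shows "(l powr ((\<kappa> - \<alpha>)/2))\<^sup>2 * (l powr (\<alpha>/2)) powr (1 - 2*H) = l powr (2*\<rho>)"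
proof -
  have "2 * ((\<kappa> - \<alpha>)/2) + \<alpha>/2 * (1 - 2*H) = 2*\<rho>"
    unfolding assms(2) by (simp add: field_simps)
  then show ?thesis unfolding powr_square_mult_powr_powr[OF assms(1)] by simp
qed

lemma eigenvalue_weight_rough:
  fixes l l0 :: real
  assumes "0 < l0" "l0 \<le> l" "0 < \<alpha>" and "\<kappa> = \<alpha>/2 + H*\<alpha> + 2*\<rho>"
  defines "\<beta> \<equiv> 2*\<kappa>/\<alpha>"
  shows "(l powr (- \<alpha>/2))\<^sup>2 * (l powr (\<alpha>/2)) powr (1 - 2*H) * (l powr (\<alpha>/2)) powr (min \<beta> 2)
    \<le> (l0 powr (\<alpha>/2)) powr (min \<beta> 2 - \<beta>) * l powr (2*\<rho>)"
proof -
  have "0 < l" using assms(1,2) by simp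
  have exponent: "2 * (- \<alpha>/2) + \<alpha>/2 * (1 - 2*H) + \<alpha>/2 * \<beta> = 2*\<rho>"
    using assms(3,4) by (simp add: \<beta>_def field_simps)
  have "(l powr (- \<alpha>/2))\<^sup>2 * (l powr (\<alpha>/2)) powr (1 - 2*H) * (l powr (\<alpha>/2)) powr \<beta>
      = l powr (2 * (- \<alpha>/2) + \<alpha>/2 * (1 - 2*H)) * l powr (\<alpha>/2 * \<beta>)"
    by (subst powr_square_mult_powr_powr[OF \<open>0 < l\<close>]) (simp only: powr_powr)
  also have "\<dots> = l powr (2*\<rho>)"
    unfolding powr_add[symmetric] exponent by (rule refl)
  finally have weight: "(l powr (- \<alpha>/2))\<^sup>2 * (l powr (\<alpha>/2)) powr (1 - 2*H) * (l powr (\<alpha>/2)) powr \<beta>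
      = l powr (2*\<rho>)" .
  have "(l powr (\<alpha>/2)) powr (min \<beta> 2) \<le> (l0 powr (\<alpha>/2)) powr (min \<beta> 2 - \<beta>) * (l powr (\<alpha>/2)) powr \<beta>"
    using assms(1-3) by (intro powr_le_powr_mult_powr powr_mono2) auto
  then have "(l powr (- \<alpha>/2))\<^sup>2 * (l powr (\<alpha>/2)) powr (1 - 2*H) * (l powr (\<alpha>/2)) powr (min \<beta> 2)
      \<le> (l powr (- \<alpha>/2))\<^sup>2 * (l powr (\<alpha>/2)) powr (1 - 2*H)
        * ((l0 powr (\<alpha>/2)) powr (min \<beta> 2 - \<beta>) * (l powr (\<alpha>/2)) powr \<beta>)"
    by (rule mult_left_mono) simp
  also have "\<dots> = (l0 powr (\<alpha>/2)) powr (min \<beta> 2 - \<beta>) * l powr (2*\<rho>)"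
    unfolding weight[symmetric] by (simp only: ac_simps)
  finally show ?thesis .
qed

theorem proposition1:
  fixes \<alpha> H T \<rho> \<kappa> :: real
    and lam q :: "nat \<Rightarrow> real"
    and M :: "'w measure"
    and \<xi> :: "nat \<Rightarrow> real \<Rightarrow> 'w \<Rightarrow> real"
  assumes "0 < \<alpha>" "\<alpha> < 1" "0 < H" "H < 1/2" "0 < T"
    and "- \<alpha>/4 - H*\<alpha>/2 < \<rho>" "\<rho> < (\<alpha>+1)/4 - H*\<alpha>/2"
    and lam_pos: "\<And>i. 0 < lam i" and lam_mono: "mono lam"
    and lam_inf: "filterlim lam at_top sequentially"
    and q_nonneg: "\<And>i. 0 \<le> q i"
    and trace: "summable (\<lambda>i. lam i powr (2*\<rho>) * q i)"
    and kappa: "\<kappa> = \<alpha>/2 + H*\<alpha> + 2*\<rho>" and "0 < \<kappa>"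
    and P: "prob_space M"
    and fbm: "\<And>i. is_fbm M H (\<xi> i)"
    and indep: "prob_space.indep_vars M (\<lambda>_. Pi\<^sub>M {0..} (\<lambda>_. borel))
                  (\<lambda>i \<omega>. restrict (\<lambda>t. \<xi> i t \<omega>) {0..}) UNIV"
  shows "\<exists>C. \<forall>s t. 0 \<le> s \<and> s \<le> t \<and> t \<le> T \<longrightarrow>
     E_norm2 M q \<xi> (\<lambda>i r. lam i powr ((\<kappa> - \<alpha>)/2) * sin (lam i powr (\<alpha>/2) * (t - r))) s t
   + E_norm2 M q \<xi> (\<lambda>i r. lam i powr ((\<kappa> - \<alpha>)/2) * cos (lam i powr (\<alpha>/2) * (t - r))) s t
       \<le> ennreal C
   \<and> E_norm2 M q \<xi> (\<lambda>i r. lam i powr (- \<alpha>/2) * sin (lam i powr (\<alpha>/2) * (t - r))) s t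
       \<le> ennreal (C * (t - s) powr (min (2*\<kappa>/\<alpha>) 2))"
proof -
  define \<mu>0 K c S where "\<mu>0 = lam 0 powr (\<alpha>/2)" and "K = 2 * T + 1 / \<mu>0"
    and "c = \<mu>0 powr (min (2*\<kappa>/\<alpha>) 2 - 2*\<kappa>/\<alpha>)" and "S = (\<Sum>i. lam i powr (2*\<rho>) * q i)"
  have lam_ge: "lam 0 \<le> lam i" for i using lam_mono by (simp add: monoD)
  have \<mu>0: "0 < \<mu>0" "\<mu>0 \<le> lam i powr (\<alpha>/2)" for i
    unfolding \<mu>0_def using lam_pos[of 0] lam_ge[of i] \<open>0 < \<alpha>\<close> by (auto intro: powr_mono2)
  have "0 \<le> K" "0 \<le> c" "0 \<le> S"
    using \<open>0 < T\<close> \<mu>0 trace q_nonneg by (auto simp: K_def c_def S_def intro!: suminf_nonneg)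
  have exponent: "0 < min (2*\<kappa>/\<alpha>) 2" "min (2*\<kappa>/\<alpha>) 2 \<le> 2"
    using \<open>0 < \<kappa>\<close> \<open>0 < \<alpha>\<close> by auto
  have rough_weight: "(lam i powr (- \<alpha>/2))\<^sup>2 * (lam i powr (\<alpha>/2)) powr (1 - 2*H)
      * (lam i powr (\<alpha>/2)) powr (min (2*\<kappa>/\<alpha>) 2) \<le> c * lam i powr (2*\<rho>)" for i
    unfolding c_def \<mu>0_def using eigenvalue_weight_rough[OF lam_pos[of 0] lam_ge[of i] \<open>0 < \<alpha>\<close> kappa] .
  note modes = P fbm \<open>0 < H\<close> \<open>H < 1/2\<close>
  show ?thesis
  proof (intro exI[of _ "16 * K * S + 8 * K * c * S"] allI impI, goal_cases)
    case (1 s t)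
    show ?case
    proof (cases "s = t")
      case True
      then show ?thesis by (simp add: E_norm2_same_time)
    next
      case False
      then have st: "0 \<le> s" "s < t" "t \<le> T" using 1 by auto
      note smooth = E_norm2_oscillatory_le[OF modes st \<mu>0(1) \<mu>0(2) _ _ _ _
          eigenvalue_weight_smooth[OF lam_pos kappa] q_nonneg trace, folded K_def S_def]
      have "E_norm2 M q \<xi> (\<lambda>i r. lam i powr ((\<kappa> - \<alpha>)/2) * sin (lam i powr (\<alpha>/2) * (t - r))) s t
          + E_norm2 M q \<xi> (\<lambda>i r. lam i powr ((\<kappa> - \<alpha>)/2) * cos (lam i powr (\<alpha>/2) * (t - r))) s t
          \<le> ennreal (8 * K * S) + ennreal (8 * K * S)"
        by (intro add_mono smooth[OF abs_sin_le_one lipschitz_on_sin DERIV_sin continuous_on_cos[OF continuous_on_id]]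
            smooth[OF abs_cos_le_one lipschitz_on_cos DERIV_cos continuous_on_minus[OF continuous_on_sin[OF continuous_on_id]]])
      also have "\<dots> \<le> ennreal (16 * K * S + 8 * K * c * S)"
        using \<open>0 \<le> K\<close> \<open>0 \<le> c\<close> \<open>0 \<le> S\<close> by (simp flip: ennreal_plus)
      finally have smooth_sum: "E_norm2 M q \<xi> (\<lambda>i r. lam i powr ((\<kappa> - \<alpha>)/2) * sin (lam i powr (\<alpha>/2) * (t - r))) s t
          + E_norm2 M q \<xi> (\<lambda>i r. lam i powr ((\<kappa> - \<alpha>)/2) * cos (lam i powr (\<alpha>/2) * (t - r))) s t
          \<le> ennreal (16 * K * S + 8 * K * c * S)" .
      have rough: "E_norm2 M q \<xi> (\<lambda>i r. lam i powr (- \<alpha>/2) * sin (lam i powr (\<alpha>/2) * (t - r))) s t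
          \<le> ennreal (8 * K * c * (t - s) powr (min (2*\<kappa>/\<alpha>) 2) * S)"
        using E_norm2_sine_le[OF modes st \<mu>0(1) \<mu>0(2) exponent rough_weight \<open>0 \<le> c\<close> powr_ge_zero q_nonneg trace]
        by (simp add: K_def S_def)
      have "8 * K * c * (t - s) powr (min (2*\<kappa>/\<alpha>) 2) * S
          \<le> (16 * K * S + 8 * K * c * S) * (t - s) powr (min (2*\<kappa>/\<alpha>) 2)"
        using \<open>0 \<le> K\<close> \<open>0 \<le> S\<close> by (simp add: algebra_simps)
      then show ?thesis using smooth_sum order_trans[OF rough ennreal_leI] by (intro conjI)
    qed
  qed
qed

end
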